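(* Let $\mathcal{G}=(V,\mathit{Act},\mathcal{R})$ be a normed BPA system (with $V$ linearly ordered) and $\mathcal{T}^\mathcal{G}=(Q,V,\Delta,q_0)$ its canonical transducer. Then for every state $R\in Q$ and all $\alpha,\beta\in V^*$: $\alpha\sim_R\mathcal{T}^\mathcal{G}_R(\alpha)$, and $\alpha\sim_R\beta$ if and only if $\mathcal{T}^\mathcal{G}_R(\alpha)=\mathcal{T}^\mathcal{G}_R(\beta)$.
   Context: BPA system $\mathcal{G}=(V,\mathit{Act},\mathcal{R})$: finite variables $V$, finite actions (possibly with silent $\tau$), rules $A\xrightarrow{a}\alpha$; LTS $\mathcal{L}_\mathcal{G}$ on $V^*$ with $A\beta\xrightarrow{a}\alpha\beta$. Normed: each variable can reach $\varepsilon$. Branching bisimilarity on an LTS: largest relation $\mathcal{B}$ such that for $(s,t)\in\mathcal{B}$ each move $s\xrightarrow{a}s'$ is matched by $a=\tau,(s',t)\in\mathcal{B}$, or by $t=t_0\xrightarrow{\tau}\cdots\xrightarrow{\tau}t_k\xrightarrow{a}t'$ with $(s',t')\in\mathcal{B}$, $(s,t_i)\in\mathcal{B}$ for $i\in[1,k]$; and symmetrically. $\sim$ is branching bisimilarity in $\mathcal{L}_\mathcal{G}$. For $R\subseteq V$, $\mathcal{L}_{\mathcal{G},R}$ arises from $\mathcal{L}_\mathcal{G}$ by removing all outgoing transitions of states in $R^*$, and $\sim_R$ is branching bisimilarity in $\mathcal{L}_{\mathcal{G},R}$. Transducers read right to left: $q'\xleftarrow{A/\gamma}q$ means $\Delta(q,A)=(q',\gamma)$,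 extended to strings by $q\xleftarrow{\varepsilon/\varepsilon}q$ and composition; $\mathcal{T}_q(\alpha)$ is the output from state $q$ on input $\alpha$. Canonical transducer: $R_\gamma=\{X\in V\mid X\gamma\sim\gamma\}$; prefix $\alpha$ of $\alpha\gamma$ is redundancy-free if not of the form $\delta X\beta$ with $X\beta\gamma\sim\beta\gamma$; $\alpha$ lexicographically smaller than $\beta$ if $\alpha$ is a proper suffix of $\beta$ or $\alpha=\alpha'A\gamma,\beta=\beta'B\gamma$ with $A<B$. $\mathcal{T}^\mathcal{G}=(Q,V,\Delta,q_0)$: $Q=\{R_\gamma\mid\gamma\in V^*\}$, $q_0=R_\varepsilon$, $\Delta(R_\gamma,A)=(R_{A\gamma},\alpha)$ where $\alpha$ is lexicographically smallest among the longest strings with $\alpha\gamma\sim A\gamma$ and $\alpha$ a redundancy-free prefix of $\alpha\gamma$ (well defined, depends only on $R_\gamma$). *)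

theory Defs
  imports Main
begin

datatype 'a act = Tau | Vis 'a

text \<open>A tau-path t = t0 -tau-> t1 -tau-> ... -tau-> tk, where the list is [t1,...,tk].\<close>
fun tau_path :: "('s \<Rightarrow> 'a act \<Rightarrow> 's \<Rightarrow> bool) \<Rightarrow> 's \<Rightarrow> 's list \<Rightarrow> bool" where
  "tau_path tr t [] = True"
| "tau_path tr t (u # us) = (tr t Tau u \<and> tau_path tr u us)"

definition branching_sim :: "('s \<Rightarrow> 'a act \<Rightarrow> 's \<Rightarrow> bool) \<Rightarrow> ('s \<times> 's) set \<Rightarrow> bool" where
  "branching_sim tr B \<longleftrightarrow>
     (\<forall>s t a s'. (s, t) \<in> B \<longrightarrow> tr s a s' \<longrightarrow>
        ((a = Tau \<and> (s', t) \<in> B) \<or>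
         (\<exists>ts t'. tau_path tr t ts \<and> tr (last (t # ts)) a t' \<and> (s', t') \<in> B
                 \<and> (\<forall>u \<in> set ts. (s, u) \<in> B))))"

definition branching_bisimulation :: "('s \<Rightarrow> 'a act \<Rightarrow> 's \<Rightarrow> bool) \<Rightarrow> ('s \<times> 's) set \<Rightarrow> bool" where
  "branching_bisimulation tr B \<longleftrightarrow> branching_sim tr B \<and> branching_sim tr (B\<inverse>)"

definition branching_bisimilar :: "('s \<Rightarrow> 'a act \<Rightarrow> 's \<Rightarrow> bool) \<Rightarrow> 's \<Rightarrow> 's \<Rightarrow> bool" where
  "branching_bisimilar tr s t \<longleftrightarrow> (\<exists>B. branching_bisimulation tr B \<and> (s, t) \<in> B)"

text \<open>Variables are the (finite, linearly ordered) type 'v; actions are 'a act (Tau is silent);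
  the rules are a set of triples (A, a, alpha) meaning A -a-> alpha.\<close>

definition bpa_step :: "('v \<times> 'a act \<times> 'v list) set \<Rightarrow> 'v list \<Rightarrow> 'a act \<Rightarrow> 'v list \<Rightarrow> bool" where
  "bpa_step Rules s a s' \<longleftrightarrow>
     (\<exists>A \<alpha> \<beta>. s = A # \<beta> \<and> (A, a, \<alpha>) \<in> Rules \<and> s' = \<alpha> @ \<beta>)"

definition normed :: "('v \<times> 'a act \<times> 'v list) set \<Rightarrow> bool" where
  "normed Rules \<longleftrightarrow> (\<forall>X. (\<lambda>s s'. \<exists>a. bpa_step Rules s a s')\<^sup>*\<^sup>* [X] [])"

definition bpa_step_R :: "('v \<times> 'a act \<times> 'v list) set \<Rightarrow> 'v set \<Rightarrow> 'v list \<Rightarrow> 'a act \<Rightarrow> 'v list \<Rightarrow> bool" where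
  "bpa_step_R Rules R s a s' \<longleftrightarrow> bpa_step Rules s a s' \<and> \<not> set s \<subseteq> R"

definition bbisim :: "('v \<times> 'a act \<times> 'v list) set \<Rightarrow> 'v list \<Rightarrow> 'v list \<Rightarrow> bool" where
  "bbisim Rules = branching_bisimilar (bpa_step Rules)"

definition bbisim_R :: "('v \<times> 'a act \<times> 'v list) set \<Rightarrow> 'v set \<Rightarrow> 'v list \<Rightarrow> 'v list \<Rightarrow> bool" where
  "bbisim_R Rules R = branching_bisimilar (bpa_step_R Rules R)"

definition Rset :: "('v \<times> 'a act \<times> 'v list) set \<Rightarrow> 'v list \<Rightarrow> 'v set" where
  "Rset Rules \<gamma> = {X. bbisim Rules (X # \<gamma>) \<gamma>}"

definition canon_states :: "('v \<times> 'a act \<times> 'v list) set \<Rightarrow> 'v set set" where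
  "canon_states Rules = range (Rset Rules)"

definition redundancy_free :: "('v \<times> 'a act \<times> 'v list) set \<Rightarrow> 'v list \<Rightarrow> 'v list \<Rightarrow> bool" where
  "redundancy_free Rules \<alpha> \<gamma> \<longleftrightarrow>
     \<not> (\<exists>\<delta> X \<beta>. \<alpha> = \<delta> @ X # \<beta> \<and> bbisim Rules (X # \<beta> @ \<gamma>) (\<beta> @ \<gamma>))"

definition lex_less :: "'v::linorder list \<Rightarrow> 'v list \<Rightarrow> bool" where
  "lex_less \<alpha> \<beta> \<longleftrightarrow>
     (\<exists>\<delta>. \<delta> \<noteq> [] \<and> \<beta> = \<delta> @ \<alpha>) \<or>
     (\<exists>\<alpha>' \<beta>' A B \<gamma>. \<alpha> = \<alpha>' @ A # \<gamma> \<and> \<beta> = \<beta>' @ B # \<gamma> \<and> A < B)"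

definition out_candidates :: "('v \<times> 'a act \<times> 'v list) set \<Rightarrow> 'v list \<Rightarrow> 'v \<Rightarrow> 'v list set" where
  "out_candidates Rules \<gamma> A =
     {\<alpha>. bbisim Rules (\<alpha> @ \<gamma>) (A # \<gamma>) \<and> redundancy_free Rules \<alpha> \<gamma>}"

definition canon_out :: "('v::linorder \<times> 'a act \<times> 'v list) set \<Rightarrow> 'v list \<Rightarrow> 'v \<Rightarrow> 'v list" where
  "canon_out Rules \<gamma> A =
     (THE \<alpha>. \<alpha> \<in> out_candidates Rules \<gamma> A
        \<and> (\<forall>\<beta> \<in> out_candidates Rules \<gamma> A. length \<beta> \<le> length \<alpha>)
        \<and> (\<forall>\<beta> \<in> out_candidates Rules \<gamma> A. length \<beta> = length \<alpha> \<longrightarrow> \<beta> = \<alpha> \<or> lex_less \<alpha> \<beta>))"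

text \<open>Transition function: Delta(R_gamma, A) = (R_{A gamma}, alpha), computed from some
  representative gamma of the state R (the paper shows it depends only on R_gamma).\<close>
definition canon_delta :: "('v::linorder \<times> 'a act \<times> 'v list) set \<Rightarrow> 'v set \<Rightarrow> 'v \<Rightarrow> 'v set \<times> 'v list" where
  "canon_delta Rules R A =
     (let \<gamma> = (SOME \<gamma>. Rset Rules \<gamma> = R) in (Rset Rules (A # \<gamma>), canon_out Rules \<gamma> A))"

text \<open>Transducers read right to left: run on the reversed input; for input alpha A,
  first process A from q giving (q', g), then alpha from q'; output is (output of alpha) @ g.\<close>
fun run_rev :: "('q \<Rightarrow> 'v \<Rightarrow> 'q \<times> 'w list) \<Rightarrow> 'q \<Rightarrow> 'v list \<Rightarrow> 'w list" where
  "run_rev d q [] = []"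
| "run_rev d q (A # rs) = (case d q A of (q', g) \<Rightarrow> run_rev d q' rs @ g)"

definition transducer_output :: "('q \<Rightarrow> 'v \<Rightarrow> 'q \<times> 'w list) \<Rightarrow> 'q \<Rightarrow> 'v list \<Rightarrow> 'w list" where
  "transducer_output d q \<alpha> = run_rev d q (rev \<alpha>)"

definition canon_T :: "('v::linorder \<times> 'a act \<times> 'v list) set \<Rightarrow> 'v set \<Rightarrow> 'v list \<Rightarrow> 'v list" where
  "canon_T Rules R = transducer_output (canon_delta Rules) R"

end

theory Submission
  imports Defs "HOL-Library.List_Lexorder"
begin

text \<open>For \<open>R = R\<^sub>\<gamma>\<close> the processes in \<open>R\<^sup>*\<close> are exactly the prefixes \<open>\<alpha>\<close> with
  \<open>\<alpha>\<gamma> \<sim> \<gamma>\<close>, so cutting their transitions mimics the absorption of \<open>\<alpha>\<close> by \<open>\<gamma>\<close>: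
  \<open>\<alpha> \<sim>\<^sub>R \<beta>\<close> iff \<open>\<alpha>\<gamma> \<sim> \<beta>\<gamma>\<close>. Call the redundancy-free \<open>\<delta>\<close> with \<open>\<delta>\<gamma> \<sim> \<alpha>\<gamma>\<close> the
  candidates for \<open>\<alpha>\<close> over \<open>\<gamma>\<close>; then \<open>\<alpha>\<close> and \<open>\<beta>\<close> are \<open>\<sim>\<^sub>R\<close>-equivalent iff they have the
  same candidates, and the theorem follows once the output \<open>T\<^sub>R(\<alpha>)\<close> is shown to be the
  lexicographically least longest candidate. By induction on \<open>\<alpha>\<close> from the right it suffices
  that a longest candidate for \<open>\<alpha>A\<close> splits as \<open>\<delta>\<^sub>1\<delta>\<^sub>2\<close> with \<open>\<delta>\<^sub>2\<gamma> \<sim> A\<gamma>\<close>: otherwise the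
  variable of the candidate that is being consumed when a bisimilar run reaches \<open>A\<gamma>\<close> can be
  replaced by two non-redundant pieces, producing a longer candidate. Normedness enters through
  the branching norm, which bounds the length of candidates and shows that
  \<open>\<sigma>\<sigma>'\<gamma> \<sim> \<gamma>\<close> implies \<open>\<sigma>'\<gamma> \<sim> \<gamma>\<close>.\<close>

section \<open>Branching bisimilarity\<close>

definition tau_steps :: "('s \<Rightarrow> 'a act \<Rightarrow> 's \<Rightarrow> bool) \<Rightarrow> 's \<Rightarrow> 's \<Rightarrow> bool" where
  "tau_steps tr = (\<lambda>x y. tr x Tau y)\<^sup>*\<^sup>*"

lemma tau_steps_refl [simp]: "tau_steps tr t t"
  by (simp add: tau_steps_def)

lemma tau_steps_trans: "tau_steps tr x y \<Longrightarrow> tau_steps tr y z \<Longrightarrow> tau_steps tr x z"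
  unfolding tau_steps_def by (rule rtranclp_trans)

lemma tau_step_tau_steps: "tr x Tau y \<Longrightarrow> tau_steps tr x y"
  unfolding tau_steps_def by (rule r_into_rtranclp)

lemma tau_steps_step: "tau_steps tr x y \<Longrightarrow> tr y Tau z \<Longrightarrow> tau_steps tr x z"
  unfolding tau_steps_def by (rule rtranclp.rtrancl_into_rtrancl)

lemma tau_path_append_iff:
  "tau_path tr t (xs @ ys) \<longleftrightarrow> tau_path tr t xs \<and> tau_path tr (last (t # xs)) ys"
  by (induction xs arbitrary: t) auto

lemma tau_path_tau_steps_last: "tau_path tr t ts \<Longrightarrow> tau_steps tr t (last (t # ts))"
  unfolding tau_steps_def
  by (induction ts arbitrary: t) (auto intro: converse_rtranclp_into_rtranclp)

lemma tau_path_tau_steps_through: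
  assumes "tau_path tr t ts" "u \<in> set ts"
  shows "tau_steps tr t u \<and> tau_steps tr u (last (t # ts))"
proof -
  obtain xs ys where ts: "ts = xs @ u # ys" using split_list[OF assms(2)] by blast
  have "last (t # xs @ [u]) = u" by simp
  with assms(1) ts tau_path_append_iff[of tr t "xs @ [u]" ys]
  have "tau_path tr t (xs @ [u])" "tau_path tr u ys" by auto
  from tau_path_tau_steps_last[OF this(1)] tau_path_tau_steps_last[OF this(2)] ts
  show ?thesis by (simp add: last_append)
qed

lemma tau_steps_tau_path: "tau_steps tr t t' \<Longrightarrow> \<exists>ts. tau_path tr t ts \<and> last (t # ts) = t'"
  unfolding tau_steps_def
proof (induction rule: converse_rtranclp_induct)
  case base
  show ?case by (intro exI[of _ "[]"]) simp
next
  case (step y z)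
  then obtain ts where "tau_path tr z ts" "last (z # ts) = t'" by blast
  with step.hyps(1) show ?case by (intro exI[of _ "z # ts"]) simp
qed

definition branching_match ::
    "('s \<Rightarrow> 'a act \<Rightarrow> 's \<Rightarrow> bool) \<Rightarrow> ('s \<times> 's) set \<Rightarrow> 's \<Rightarrow> 's \<Rightarrow> 'a act \<Rightarrow> 's \<Rightarrow> bool" where
  "branching_match tr B s t a s' \<longleftrightarrow>
     (a = Tau \<and> (s', t) \<in> B) \<or>
     (\<exists>ts t'. tau_path tr t ts \<and> tr (last (t # ts)) a t' \<and> (s', t') \<in> B \<and> (\<forall>u \<in> set ts. (s, u) \<in> B))"

lemma branching_sim_iff_match:
  "branching_sim tr B \<longleftrightarrow> (\<forall>s t a s'. (s, t) \<in> B \<longrightarrow> tr s a s' \<longrightarrow> branching_match tr B s t a s')"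
  unfolding branching_sim_def branching_match_def ..

lemma branching_match_tau: "(s', t) \<in> B \<Longrightarrow> branching_match tr B s t Tau s'"
  unfolding branching_match_def by simp

lemma branching_match_path:
  "tau_path tr t ts \<Longrightarrow> tr (last (t # ts)) a t' \<Longrightarrow> (s', t') \<in> B \<Longrightarrow> \<forall>u \<in> set ts. (s, u) \<in> B
   \<Longrightarrow> branching_match tr B s t a s'"
  unfolding branching_match_def by blast

lemma branching_match_step: "tr t a t' \<Longrightarrow> (s', t') \<in> B \<Longrightarrow> branching_match tr B s t a s'"
  using branching_match_path[of tr t "[]"] by simp

lemma branching_match_mono: "branching_match tr B s t a s' \<Longrightarrow> B \<subseteq> B' \<Longrightarrow> branching_match tr B' s t a s'"
  unfolding branching_match_def by blast

lemma branching_matchE: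
  assumes "branching_match tr B s t a s'"
  obtains "a = Tau" "(s', t) \<in> B"
    | ts t' where "tau_path tr t ts" "tr (last (t # ts)) a t'" "(s', t') \<in> B" "\<forall>u \<in> set ts. (s, u) \<in> B"
  using assms unfolding branching_match_def by blast

text \<open>Semi-branching bisimulations (Basten) relax the intermediate states of a match to its
  endpoints; unlike branching bisimulations they compose, and the largest one turns out to be
  branching. This is how transitivity of branching bisimilarity is obtained.\<close>

definition semi_match ::
    "('s \<Rightarrow> 'a act \<Rightarrow> 's \<Rightarrow> bool) \<Rightarrow> ('s \<times> 's) set \<Rightarrow> 's \<Rightarrow> 's \<Rightarrow> 'a act \<Rightarrow> 's \<Rightarrow> bool" where
  "semi_match tr B s t a s' \<longleftrightarrow>
     (a = Tau \<and> (\<exists>t'. tau_steps tr t t' \<and> (s, t') \<in> B \<and> (s', t') \<in> B)) \<or>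
     (\<exists>t'' t'. tau_steps tr t t'' \<and> tr t'' a t' \<and> (s, t'') \<in> B \<and> (s', t') \<in> B)"

definition semi_branching_sim :: "('s \<Rightarrow> 'a act \<Rightarrow> 's \<Rightarrow> bool) \<Rightarrow> ('s \<times> 's) set \<Rightarrow> bool" where
  "semi_branching_sim tr B \<longleftrightarrow> (\<forall>s t a s'. (s, t) \<in> B \<longrightarrow> tr s a s' \<longrightarrow> semi_match tr B s t a s')"

definition semi_branching_bisimulation :: "('s \<Rightarrow> 'a act \<Rightarrow> 's \<Rightarrow> bool) \<Rightarrow> ('s \<times> 's) set \<Rightarrow> bool" where
  "semi_branching_bisimulation tr B \<longleftrightarrow> semi_branching_sim tr B \<and> semi_branching_sim tr (B\<inverse>)"

definition semi_branching_bisimilarity :: "('s \<Rightarrow> 'a act \<Rightarrow> 's \<Rightarrow> bool) \<Rightarrow> ('s \<times> 's) set" where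
  "semi_branching_bisimilarity tr = \<Union>{B. semi_branching_bisimulation tr B}"

lemma semi_match_mono: "semi_match tr B s t a s' \<Longrightarrow> B \<subseteq> B' \<Longrightarrow> semi_match tr B' s t a s'"
  unfolding semi_match_def by blast

lemma semi_match_tau_steps: "semi_match tr B s t a s' \<Longrightarrow> tau_steps tr t0 t \<Longrightarrow> semi_match tr B s t0 a s'"
  unfolding semi_match_def by (meson tau_steps_trans)

lemma branching_match_imp_semi_match:
  assumes "branching_match tr B s t a s'" "(s, t) \<in> B"
  shows "semi_match tr B s t a s'"
  using assms(1)
proof (cases rule: branching_matchE)
  case 1
  then show ?thesis using assms(2) unfolding semi_match_def by auto
next
  case (2 ts t')
  have "(s, last (t # ts)) \<in> B" using 2(4) assms(2) by (cases ts) auto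
  then show ?thesis using 2 tau_path_tau_steps_last[OF 2(1)] unfolding semi_match_def by blast
qed

lemma branching_sim_imp_semi: "branching_sim tr B \<Longrightarrow> semi_branching_sim tr B"
  unfolding branching_sim_iff_match semi_branching_sim_def
  by (auto intro: branching_match_imp_semi_match)

lemma semi_branching_sim_tau_steps:
  assumes "semi_branching_sim tr B" "(s, t) \<in> B" "tau_steps tr s s'"
  shows "\<exists>t'. tau_steps tr t t' \<and> (s', t') \<in> B"
  using assms(3)[unfolded tau_steps_def]
proof (induction rule: rtranclp_induct)
  case base
  have "tau_steps tr t t" by simp
  then show ?case using assms(2) by blast
next
  case (step y z)
  then obtain t1 where t1: "tau_steps tr t t1" "(y, t1) \<in> B" by blast
  from assms(1)[unfolded semi_branching_sim_def, rule_format, OF t1(2) step.hyps(2)]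
  have "semi_match tr B y t1 Tau z" .
  then obtain t' where "tau_steps tr t1 t'" "(z, t') \<in> B"
    unfolding semi_match_def
  proof (elim disjE conjE exE)
    fix t' assume "tau_steps tr t1 t'" "(z, t') \<in> B"
    then show thesis by (rule that)
  next
    fix t'' t' assume "tau_steps tr t1 t''" "tr t'' Tau t'" "(z, t') \<in> B"
    then show thesis by (blast intro: that tau_steps_step)
  qed
  then show ?case using tau_steps_trans[OF t1(1)] by blast
qed

lemma semi_match_relcomp:
  assumes "semi_match tr B2 u t a u'" "(s, u) \<in> B1" "(s', u') \<in> B1"
  shows "semi_match tr (B1 O B2) s t a s'"
  using assms(1)[unfolded semi_match_def]
proof (elim disjE conjE exE)
  fix t' assume "a = Tau" "tau_steps tr t t'" "(u, t') \<in> B2" "(u', t') \<in> B2"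
  then show ?thesis using assms(2,3) unfolding semi_match_def
    by (intro disjI1 conjI exI[of _ t']) auto
next
  fix t'' t' assume "tau_steps tr t t''" "tr t'' a t'" "(u, t'') \<in> B2" "(u', t') \<in> B2"
  then show ?thesis using assms(2,3) unfolding semi_match_def
    by (intro disjI2 exI[of _ t''] exI[of _ t'] conjI) auto
qed

lemma semi_branching_sim_relcomp:
  assumes B1: "semi_branching_sim tr B1" and B2: "semi_branching_sim tr B2"
  shows "semi_branching_sim tr (B1 O B2)"
  unfolding semi_branching_sim_def
proof (intro allI impI)
  fix s t a s'
  assume "(s, t) \<in> B1 O B2" and m: "tr s a s'"
  then obtain u where su: "(s, u) \<in> B1" and ut: "(u, t) \<in> B2" by auto
  from B1[unfolded semi_branching_sim_def, rule_format, OF su m]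
  consider u' where "a = Tau" "tau_steps tr u u'" "(s, u') \<in> B1" "(s', u') \<in> B1"
    | u'' u' where "tau_steps tr u u''" "tr u'' a u'" "(s, u'') \<in> B1" "(s', u') \<in> B1"
    unfolding semi_match_def by blast
  then show "semi_match tr (B1 O B2) s t a s'"
  proof cases
    case (1 u')
    obtain t' where t': "tau_steps tr t t'" "(u', t') \<in> B2"
      using semi_branching_sim_tau_steps[OF B2 ut 1(2)] by blast
    have "(s, t') \<in> B1 O B2" "(s', t') \<in> B1 O B2" using 1(3,4) t'(2) by auto
    with 1(1) t'(1) show ?thesis unfolding semi_match_def by blast
  next
    case (2 u'' u')
    obtain t1 where t1: "tau_steps tr t t1" "(u'', t1) \<in> B2"
      using semi_branching_sim_tau_steps[OF B2 ut 2(1)] by blast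
    from B2[unfolded semi_branching_sim_def, rule_format, OF t1(2) 2(2)]
    have "semi_match tr (B1 O B2) s t1 a s'"
      using 2(3,4) by (rule semi_match_relcomp)
    then show ?thesis using t1(1) by (rule semi_match_tau_steps)
  qed
qed

lemma semi_branching_sim_Union:
  assumes "\<And>B. B \<in> F \<Longrightarrow> semi_branching_sim tr B"
  shows "semi_branching_sim tr (\<Union>F)"
  unfolding semi_branching_sim_def
proof (intro allI impI)
  fix s t a s' assume "(s, t) \<in> \<Union>F" "tr s a s'"
  then obtain B where B: "B \<in> F" "(s, t) \<in> B" by blast
  have "semi_match tr B s t a s'"
    using assms[OF B(1)] B(2) \<open>tr s a s'\<close> unfolding semi_branching_sim_def by blast
  then show "semi_match tr (\<Union>F) s t a s'"
    using Union_upper[OF B(1)] by (rule semi_match_mono)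
qed

lemma semi_branching_bisimilarity_is_bisimulation:
  "semi_branching_bisimulation tr (semi_branching_bisimilarity tr)"
proof -
  have "(semi_branching_bisimilarity tr)\<inverse> = \<Union>{B\<inverse> | B. semi_branching_bisimulation tr B}"
    unfolding semi_branching_bisimilarity_def by blast
  then show ?thesis
    unfolding semi_branching_bisimulation_def
    by (auto intro!: semi_branching_sim_Union simp: semi_branching_bisimilarity_def
        semi_branching_bisimulation_def)
qed

lemma semi_branching_bisimilarity_sym:
  assumes "(s, t) \<in> semi_branching_bisimilarity tr"
  shows "(t, s) \<in> semi_branching_bisimilarity tr"
proof -
  obtain B where "semi_branching_bisimulation tr B" "(s, t) \<in> B"
    using assms unfolding semi_branching_bisimilarity_def by blast
  then have "semi_branching_bisimulation tr (B\<inverse>)" "(t, s) \<in> B\<inverse>"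
    unfolding semi_branching_bisimulation_def by auto
  then show ?thesis unfolding semi_branching_bisimilarity_def by blast
qed

lemma semi_branching_bisimilarity_trans:
  assumes "(s, t) \<in> semi_branching_bisimilarity tr" "(t, u) \<in> semi_branching_bisimilarity tr"
  shows "(s, u) \<in> semi_branching_bisimilarity tr"
proof -
  let ?S = "semi_branching_bisimilarity tr"
  have "semi_branching_bisimulation tr (?S O ?S)"
    using semi_branching_bisimilarity_is_bisimulation[of tr]
    unfolding semi_branching_bisimulation_def converse_relcomp
    by (blast intro: semi_branching_sim_relcomp)
  moreover have "(s, u) \<in> ?S O ?S" using assms by blast
  ultimately show ?thesis unfolding semi_branching_bisimilarity_def by blast
qed

lemma semi_branching_sim_insert:
  assumes "semi_branching_sim tr S" "\<And>a x'. tr x a x' \<Longrightarrow> semi_match tr S x y a x'"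
  shows "semi_branching_sim tr (insert (x, y) S)"
  unfolding semi_branching_sim_def
proof (intro allI impI)
  fix s t a s' assume "(s, t) \<in> insert (x, y) S" "tr s a s'"
  with assms have "semi_match tr S s t a s'" unfolding semi_branching_sim_def by blast
  then show "semi_match tr (insert (x, y) S) s t a s'" by (rule semi_match_mono) blast
qed

lemma semi_branching_bisimilarity_stutter:
  assumes rs: "(r, s) \<in> semi_branching_bisimilarity tr" and r2s: "(r2, s) \<in> semi_branching_bisimilarity tr"
    and r1: "tau_steps tr r r1" and r12: "tau_steps tr r1 r2"
  shows "(r1, s) \<in> semi_branching_bisimilarity tr"
proof -
  let ?S = "semi_branching_bisimilarity tr"
  have S: "semi_branching_sim tr ?S" "semi_branching_sim tr (?S\<inverse>)"
    using semi_branching_bisimilarity_is_bisimulation unfolding semi_branching_bisimulation_def by auto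
  obtain s1 where s1: "tau_steps tr s s1" "(r1, s1) \<in> ?S"
    using semi_branching_sim_tau_steps[OF S(1) rs r1] by blast
  have "semi_branching_sim tr (insert (r1, s) ?S)"
  proof (rule semi_branching_sim_insert[OF S(1)])
    fix a x' assume "tr r1 a x'"
    with S(1) s1(2) have "semi_match tr ?S r1 s1 a x'" unfolding semi_branching_sim_def by blast
    then show "semi_match tr ?S r1 s a x'" using s1(1) by (rule semi_match_tau_steps)
  qed
  moreover have "semi_branching_sim tr (insert (s, r1) (?S\<inverse>))"
  proof (rule semi_branching_sim_insert[OF S(2)])
    fix a x' assume "tr s a x'"
    with S(2) r2s have "semi_match tr (?S\<inverse>) s r2 a x'" unfolding semi_branching_sim_def by blast
    then show "semi_match tr (?S\<inverse>) s r1 a x'" using r12 by (rule semi_match_tau_steps)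
  qed
  moreover have "(insert (r1, s) ?S)\<inverse> = insert (s, r1) (?S\<inverse>)" by auto
  ultimately have "semi_branching_bisimulation tr (insert (r1, s) ?S)"
    unfolding semi_branching_bisimulation_def by simp
  then show ?thesis unfolding semi_branching_bisimilarity_def by blast
qed

lemma semi_branching_bisimilarity_tau_path:
  assumes "(s, t) \<in> semi_branching_bisimilarity tr" "(s, t'') \<in> semi_branching_bisimilarity tr"
    and "tau_steps tr t t''"
  obtains ts where "tau_path tr t ts" "last (t # ts) = t''"
    "\<forall>u \<in> set ts. (s, u) \<in> semi_branching_bisimilarity tr"
proof -
  obtain ts where ts: "tau_path tr t ts" "last (t # ts) = t''"
    using tau_steps_tau_path[OF assms(3)] by blast
  have "(s, u) \<in> semi_branching_bisimilarity tr" if "u \<in> set ts" for u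
  proof -
    from tau_path_tau_steps_through[OF ts(1) that] ts(2)
    have "tau_steps tr t u" "tau_steps tr u t''" by auto
    from semi_branching_bisimilarity_stutter[OF semi_branching_bisimilarity_sym[OF assms(1)]
        semi_branching_bisimilarity_sym[OF assms(2)] this]
    show ?thesis by (rule semi_branching_bisimilarity_sym)
  qed
  with ts that show thesis by blast
qed

lemma semi_branching_bisimilarity_branching_match:
  assumes st: "(s, t) \<in> semi_branching_bisimilarity tr" and "tr s a s'"
  shows "branching_match tr (semi_branching_bisimilarity tr) s t a s'"
proof -
  let ?S = "semi_branching_bisimilarity tr"
  have path_match: "branching_match tr ?S s t a s'"
    if "tau_steps tr t t''" "tr t'' a t'" "(s, t'') \<in> ?S" "(s', t') \<in> ?S" for t'' t'
    using st that(3,1) by (rule semi_branching_bisimilarity_tau_path)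
      (use that(2,4) in \<open>blast intro: branching_match_path\<close>)
  from assms semi_branching_bisimilarity_is_bisimulation[of tr]
  have "semi_match tr ?S s t a s'"
    unfolding semi_branching_bisimulation_def semi_branching_sim_def by blast
  then consider t' where "a = Tau" "tau_steps tr t t'" "(s, t') \<in> ?S" "(s', t') \<in> ?S"
    | t'' t' where "tau_steps tr t t''" "tr t'' a t'" "(s, t'') \<in> ?S" "(s', t') \<in> ?S"
    unfolding semi_match_def by blast
  then show ?thesis
  proof cases
    case (1 t')
    show ?thesis
    proof (cases "t' = t")
      case True
      then show ?thesis using 1 by (simp add: branching_match_tau)
    next
      case False
      \<comment> \<open>split off the last tau-step; its source is related to s by stuttering\<close>
      then obtain t'' where t'': "tau_steps tr t t''" "tr t'' Tau t'"
        using 1(2) unfolding tau_steps_def by (metis rtranclp.cases)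
      have "tau_steps tr t'' t'" using t''(2) by (rule tau_step_tau_steps)
      from semi_branching_bisimilarity_stutter[OF semi_branching_bisimilarity_sym[OF st]
          semi_branching_bisimilarity_sym[OF 1(3)] t''(1) this]
      have "(s, t'') \<in> ?S" by (rule semi_branching_bisimilarity_sym)
      then show ?thesis using path_match t'' 1 by blast
    qed
  next
    case (2 t'' t')
    then show ?thesis by (rule path_match)
  qed
qed

lemma branching_bisimilarI:
  assumes "branching_sim tr B" "sym B" "(s, t) \<in> B"
  shows "branching_bisimilar tr s t"
  using assms unfolding branching_bisimilar_def branching_bisimulation_def sym_conv_converse_eq
  by auto

lemma branching_bisimilar_iff_semi:
  "branching_bisimilar tr s t \<longleftrightarrow> (s, t) \<in> semi_branching_bisimilarity tr"
proof
  assume "branching_bisimilar tr s t"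
  then show "(s, t) \<in> semi_branching_bisimilarity tr"
    unfolding branching_bisimilar_def branching_bisimulation_def semi_branching_bisimilarity_def
      semi_branching_bisimulation_def
    by (blast intro: branching_sim_imp_semi)
next
  assume "(s, t) \<in> semi_branching_bisimilarity tr"
  then show "branching_bisimilar tr s t"
  proof (rule branching_bisimilarI[rotated 2])
    show "branching_sim tr (semi_branching_bisimilarity tr)"
      unfolding branching_sim_iff_match by (blast intro: semi_branching_bisimilarity_branching_match)
    show "sym (semi_branching_bisimilarity tr)"
      unfolding sym_def by (blast intro: semi_branching_bisimilarity_sym)
  qed
qed

lemma branching_bisimilar_refl: "branching_bisimilar tr s s"
proof (rule branching_bisimilarI)
  show "branching_sim tr Id"
    unfolding branching_sim_iff_match by (auto intro: branching_match_step)
qed (auto simp: sym_Id)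

lemma branching_bisimilar_sym: "branching_bisimilar tr s t \<Longrightarrow> branching_bisimilar tr t s"
  unfolding branching_bisimilar_iff_semi by (rule semi_branching_bisimilarity_sym)

lemma branching_bisimilar_trans:
  "branching_bisimilar tr s t \<Longrightarrow> branching_bisimilar tr t u \<Longrightarrow> branching_bisimilar tr s u"
  unfolding branching_bisimilar_iff_semi by (rule semi_branching_bisimilarity_trans)

lemma branching_bisimilar_match:
  assumes "branching_bisimilar tr s t" "tr s a s'"
  shows "branching_match tr {(x, y). branching_bisimilar tr x y} s t a s'"
proof -
  let ?S = "semi_branching_bisimilarity tr"
  have "(s, t) \<in> ?S" using assms(1) by (simp add: branching_bisimilar_iff_semi)
  then have "branching_match tr ?S s t a s'"
    using assms(2) by (rule semi_branching_bisimilarity_branching_match)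
  moreover have "?S = {(x, y). branching_bisimilar tr x y}" by (auto simp: branching_bisimilar_iff_semi)
  ultimately show ?thesis by simp
qed

lemma branching_bisimilarI_union:
  assumes "sym B" "(s, t) \<in> B"
    and match: "\<And>s t a s'. (s, t) \<in> B \<Longrightarrow> tr s a s' \<Longrightarrow>
      branching_match tr (B \<union> {(x, y). branching_bisimilar tr x y}) s t a s'"
  shows "branching_bisimilar tr s t"
proof (rule branching_bisimilarI)
  let ?B = "B \<union> {(x, y). branching_bisimilar tr x y}"
  show "branching_sim tr ?B"
    unfolding branching_sim_iff_match
  proof (intro allI impI)
    fix s t a s' assume st: "(s, t) \<in> ?B" and m: "tr s a s'"
    show "branching_match tr ?B s t a s'"
    proof (cases "(s, t) \<in> B")
      case True
      then show ?thesis using m by (rule match)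
    next
      case False
      with st have "branching_bisimilar tr s t" by simp
      from branching_bisimilar_match[OF this m] show ?thesis
        by (rule branching_match_mono) blast
    qed
  qed
  show "sym ?B"
    using assms(1) by (auto simp: sym_def intro: branching_bisimilar_sym)
  show "(s, t) \<in> ?B" using assms(2) by simp
qed

lemma branching_match_tau_path_prefix:
  assumes "tau_path tr t ts" "\<forall>u \<in> set ts. (s, u) \<in> B" "branching_match tr B s (last (t # ts)) a s'"
  shows "branching_match tr B s t a s'"
  using assms(3)
proof (cases rule: branching_matchE)
  case 1
  show ?thesis
  proof (cases ts rule: rev_cases)
    case Nil
    with 1 show ?thesis by (simp add: branching_match_tau)
  next
    case (snoc us u)
    with assms(1,2) 1 show ?thesis
      by (intro branching_match_path[of tr t us _ u]) (auto simp: tau_path_append_iff)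
  qed
next
  case (2 ts' t')
  with assms(1,2) show ?thesis
    by (intro branching_match_path[of tr t "ts @ ts'" _ t'])
      (auto simp: tau_path_append_iff last_append split: if_splits)
qed

section \<open>BPA processes\<close>

abbreviation bpa_moves :: "('v \<times> 'a act \<times> 'v list) set \<Rightarrow> 'v list \<Rightarrow> 'v list \<Rightarrow> bool" where
  "bpa_moves Rules \<equiv> (\<lambda>x y. \<exists>a. bpa_step Rules x a y)\<^sup>*\<^sup>*"

lemma bpa_step_Nil [simp]: "\<not> bpa_step Rules [] a s"
  unfolding bpa_step_def by auto

lemma bpa_step_append: "bpa_step Rules x a y \<Longrightarrow> bpa_step Rules (x @ w) a (y @ w)"
  unfolding bpa_step_def by auto

lemma bpa_step_appendE:
  assumes "bpa_step Rules (x @ w) a u" "x \<noteq> []"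
  obtains x' where "u = x' @ w" "bpa_step Rules x a x'"
  using assms unfolding bpa_step_def by (cases x) auto

lemma bpa_moves_append: "bpa_moves Rules x y \<Longrightarrow> bpa_moves Rules (x @ w) (y @ w)"
proof (induction rule: rtranclp_induct)
  case (step y z)
  then show ?case by (blast intro: rtranclp.rtrancl_into_rtrancl bpa_step_append)
qed simp

lemma normed_moves_Nil:
  assumes "normed Rules"
  shows "bpa_moves Rules s []"
proof (induction s)
  case (Cons X s)
  have "bpa_moves Rules ([X] @ s) ([] @ s)"
    using assms unfolding normed_def by (blast intro: bpa_moves_append)
  with Cons.IH show ?case by simp
qed simp

lemma last_map_append: "last ((b @ w) # map (\<lambda>x. x @ w) bs) = last (b # bs) @ w"
  by (induction bs arbitrary: b) auto

lemma bbisim_refl: "bbisim Rules s s"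
  unfolding bbisim_def by (rule branching_bisimilar_refl)

lemma bbisim_sym: "bbisim Rules s t \<Longrightarrow> bbisim Rules t s"
  unfolding bbisim_def by (rule branching_bisimilar_sym)

lemma bbisim_trans: "bbisim Rules s t \<Longrightarrow> bbisim Rules t u \<Longrightarrow> bbisim Rules s u"
  unfolding bbisim_def by (rule branching_bisimilar_trans)

lemma bbisim_match:
  "bbisim Rules s t \<Longrightarrow> bpa_step Rules s a s' \<Longrightarrow>
   branching_match (bpa_step Rules) {(x, y). bbisim Rules x y} s t a s'"
  unfolding bbisim_def by (rule branching_bisimilar_match)

lemma bbisimI_union:
  assumes "sym B" "(s, t) \<in> B"
    and "\<And>s t a s'. (s, t) \<in> B \<Longrightarrow> bpa_step Rules s a s' \<Longrightarrow>
      branching_match (bpa_step Rules) (B \<union> {(x, y). bbisim Rules x y}) s t a s'"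
  shows "bbisim Rules s t"
  using assms unfolding bbisim_def by (rule branching_bisimilarI_union)

lemma bbisim_Nil_tau_path:
  assumes "normed Rules" "bbisim Rules s []"
  obtains ss where "tau_path (bpa_step Rules) s ss" "last (s # ss) = []"
    "\<forall>u \<in> set ss. bbisim Rules u []"
proof -
  have "\<exists>ss. tau_path (bpa_step Rules) s ss \<and> last (s # ss) = [] \<and> (\<forall>u \<in> set ss. bbisim Rules u [])"
    using normed_moves_Nil[OF assms(1), of s] assms(2)
  proof (induction rule: converse_rtranclp_induct)
    case base
    show ?case by (intro exI[of _ "[]"]) simp
  next
    case (step y z)
    then obtain a where m: "bpa_step Rules y a z" by blast
    from bbisim_match[OF step.prems m] show ?case
    proof (cases rule: branching_matchE)
      case 1
      with step.IH obtain ss where "tau_path (bpa_step Rules) z ss" "last (z # ss) = []"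
        "\<forall>u \<in> set ss. bbisim Rules u []" by auto
      with 1 m show ?thesis by (intro exI[of _ "z # ss"]) auto
    next
      case (2 ts t')
      then show ?thesis by (cases ts) auto
    qed
  qed
  with that show thesis by blast
qed

lemma bbisim_append_left:
  assumes "bbisim Rules s t"
  shows "bbisim Rules (\<sigma> @ s) (\<sigma> @ t)"
proof (rule bbisimI_union)
  let ?B = "{(\<sigma> @ s, \<sigma> @ t) | \<sigma> s t. bbisim Rules s t}"
  show "sym ?B" by (auto simp: sym_def intro: bbisim_sym)
  show "(\<sigma> @ s, \<sigma> @ t) \<in> ?B" using assms by blast
  fix x y a x' assume "(x, y) \<in> ?B" and m: "bpa_step Rules x a x'"
  then obtain \<sigma> s t where e: "x = \<sigma> @ s" "y = \<sigma> @ t" "bbisim Rules s t" by blast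
  show "branching_match (bpa_step Rules) (?B \<union> {(x, y). bbisim Rules x y}) x y a x'"
  proof (cases "\<sigma> = []")
    case True
    with e m have "branching_match (bpa_step Rules) {(x, y). bbisim Rules x y} x y a x'"
      by (simp add: bbisim_match)
    then show ?thesis by (rule branching_match_mono) blast
  next
    case False
    with m e obtain \<sigma>' where "x' = \<sigma>' @ s" "bpa_step Rules \<sigma> a \<sigma>'"
      by (auto elim: bpa_step_appendE)
    with e show ?thesis by (blast intro: branching_match_step bpa_step_append)
  qed
qed

section \<open>Branching norm and redundancy\<close>

inductive branching_norm_le :: "('v \<times> 'a act \<times> 'v list) set \<Rightarrow> 'v list \<Rightarrow> nat \<Rightarrow> bool"
  for Rules where
  Nil: "branching_norm_le Rules [] n"
| inert: "bpa_step Rules s a s' \<Longrightarrow> bbisim Rules s s' \<Longrightarrow> branching_norm_le Rules s' n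
    \<Longrightarrow> branching_norm_le Rules s n"
| step: "bpa_step Rules s a s' \<Longrightarrow> branching_norm_le Rules s' n
    \<Longrightarrow> branching_norm_le Rules s (Suc n)"

lemma branching_norm_le_mono:
  "branching_norm_le Rules s n \<Longrightarrow> n \<le> m \<Longrightarrow> branching_norm_le Rules s m"
proof (induction arbitrary: m rule: branching_norm_le.induct)
  case (step s a s' n)
  then obtain m' where "m = Suc m'" "n \<le> m'" by (cases m) auto
  with step show ?case by (blast intro: branching_norm_le.step)
qed (blast intro: branching_norm_le.intros)+

lemma normed_branching_norm_le:
  assumes "normed Rules"
  obtains n where "branching_norm_le Rules s n"
  using normed_moves_Nil[OF assms, of s]
  by (induction rule: converse_rtranclp_induct) (blast intro: branching_norm_le.intros)+

lemma branching_norm_le_inert_path: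
  "tau_path (bpa_step Rules) t ts \<Longrightarrow> \<forall>u \<in> set (t # ts). bbisim Rules u c
   \<Longrightarrow> branching_norm_le Rules (last (t # ts)) n \<Longrightarrow> branching_norm_le Rules t n"
proof (induction ts arbitrary: t)
  case (Cons u us)
  then have "bbisim Rules t u" "branching_norm_le Rules u n"
    by (auto intro: bbisim_trans bbisim_sym)
  with Cons.prems(1) show ?case by (auto intro: branching_norm_le.inert)
qed simp

lemma branching_norm_le_bbisim:
  assumes "normed Rules"
  shows "branching_norm_le Rules s n \<Longrightarrow> bbisim Rules s t \<Longrightarrow> branching_norm_le Rules t n"
proof (induction arbitrary: t rule: branching_norm_le.induct)
  case (Nil n)
  then have "bbisim Rules t []" by (rule bbisim_sym)
  with assms obtain ts where ts: "tau_path (bpa_step Rules) t ts" "last (t # ts) = []"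
    "\<forall>u \<in> set ts. bbisim Rules u []"
    by (rule bbisim_Nil_tau_path)
  with \<open>bbisim Rules t []\<close> show ?case
    by (intro branching_norm_le_inert_path[OF ts(1)]) (auto intro: branching_norm_le.Nil)
next
  case (inert s a s' n)
  then show ?case by (blast intro: bbisim_trans bbisim_sym)
next
  case (step s a s' n)
  from bbisim_match[OF step.prems step.hyps(1)] show ?case
  proof (cases rule: branching_matchE)
    case 1
    then have "branching_norm_le Rules t n" using step.IH by simp
    then show ?thesis by (rule branching_norm_le_mono) simp
  next
    case (2 ts t')
    then have "branching_norm_le Rules (last (t # ts)) (Suc n)"
      using step.IH by (blast intro: branching_norm_le.step)
    moreover have "\<forall>u \<in> set (t # ts). bbisim Rules u s"
      using 2(4) step.prems by (auto intro: bbisim_sym)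
    ultimately show ?thesis using branching_norm_le_inert_path[OF 2(1)] by blast
  qed
qed

lemma branching_norm_le_suffix:
  assumes "branching_norm_le Rules (\<mu> @ v) n"
  obtains m where "m \<le> n" "branching_norm_le Rules v m" "m = n \<longrightarrow> bbisim Rules (\<mu> @ v) v"
proof -
  have split: "\<exists>m \<le> n. branching_norm_le Rules v m \<and> (m = n \<longrightarrow> bbisim Rules (\<mu> @ v) v)"
    if hyp: "branching_norm_le Rules x n" "x = \<mu> @ v" "\<mu> \<noteq> []" for x \<mu> n
    using hyp
  proof (induction arbitrary: \<mu> rule: branching_norm_le.induct)
    case (inert s a s' n)
    then obtain \<mu>' where \<mu>': "s' = \<mu>' @ v" "bpa_step Rules \<mu> a \<mu>'"
      by (auto elim: bpa_step_appendE)
    show ?case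
    proof (cases "\<mu>' = []")
      case True
      with inert \<mu>' show ?thesis by auto
    next
      case False
      with inert.IH \<mu>'(1) obtain k where "k \<le> n" "branching_norm_le Rules v k"
        "k = n \<longrightarrow> bbisim Rules (\<mu>' @ v) v" by blast
      with inert.hyps(2) inert.prems(1) \<mu>'(1) show ?thesis by (blast intro: bbisim_trans)
    qed
  next
    case (step s a s' n)
    then obtain \<mu>' where \<mu>': "s' = \<mu>' @ v" "bpa_step Rules \<mu> a \<mu>'"
      by (auto elim: bpa_step_appendE)
    show ?case
    proof (cases "\<mu>' = []")
      case True
      with step \<mu>' show ?thesis by (intro exI[of _ n]) auto
    next
      case False
      with step.IH \<mu>'(1) obtain k where "k \<le> n" "branching_norm_le Rules v k" by blast
      then show ?thesis by (intro exI[of _ k]) auto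
    qed
  qed simp
  show thesis
  proof (cases "\<mu> = []")
    case True
    with assms show thesis by (intro that[of n]) (auto simp: bbisim_refl)
  next
    case False
    with assms split show thesis by (blast intro: that)
  qed
qed

lemma redundancy_free_Nil [simp]: "redundancy_free Rules [] w"
  unfolding redundancy_free_def by simp

lemma redundancy_free_Cons:
  "redundancy_free Rules (X # \<beta>) w \<longleftrightarrow>
     \<not> bbisim Rules (X # \<beta> @ w) (\<beta> @ w) \<and> redundancy_free Rules \<beta> w"
  unfolding redundancy_free_def by (auto simp: Cons_eq_append_conv)

lemma redundancy_free_append:
  "redundancy_free Rules (\<sigma> @ \<tau>) w \<longleftrightarrow> redundancy_free Rules \<sigma> (\<tau> @ w) \<and> redundancy_free Rules \<tau> w"
  by (induction \<sigma>) (auto simp: redundancy_free_Cons)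

lemma redundancy_free_norm_bound:
  "branching_norm_le Rules (\<delta> @ w) n \<Longrightarrow> redundancy_free Rules \<delta> w \<Longrightarrow>
   \<exists>m. branching_norm_le Rules w m \<and> m + length \<delta> \<le> n"
proof (induction \<delta> arbitrary: n)
  case (Cons X \<beta>)
  from Cons.prems(2) have nb: "\<not> bbisim Rules ([X] @ \<beta> @ w) (\<beta> @ w)"
    and rb: "redundancy_free Rules \<beta> w" by (auto simp: redundancy_free_Cons)
  from Cons.prems(1) have "branching_norm_le Rules ([X] @ \<beta> @ w) n" by simp
  then obtain m where "m \<le> n" "branching_norm_le Rules (\<beta> @ w) m"
    "m = n \<longrightarrow> bbisim Rules ([X] @ \<beta> @ w) (\<beta> @ w)"
    by (rule branching_norm_le_suffix)
  with nb Cons.IH[OF _ rb] show ?case by fastforce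
qed auto

lemma bbisim_collapse:
  assumes "normed Rules" "bbisim Rules (\<sigma> @ \<sigma>' @ t) t"
  shows "bbisim Rules (\<sigma>' @ t) t"
proof -
  obtain n where n: "branching_norm_le Rules t n" "\<forall>m < n. \<not> branching_norm_le Rules t m"
    using normed_branching_norm_le[OF assms(1), of t] exists_least_iff[of "branching_norm_le Rules t"]
    by blast
  have "branching_norm_le Rules (\<sigma> @ \<sigma>' @ t) n"
    using branching_norm_le_bbisim[OF assms(1) n(1)] assms(2) bbisim_sym by blast
  then obtain m1 where m1: "m1 \<le> n" "branching_norm_le Rules (\<sigma>' @ t) m1"
    by (rule branching_norm_le_suffix)
  then obtain m2 where m2: "m2 \<le> m1" "branching_norm_le Rules t m2"
    "m2 = m1 \<longrightarrow> bbisim Rules (\<sigma>' @ t) t"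
    by (auto elim: branching_norm_le_suffix)
  have "\<not> m2 < n" using n(2) m2(2) by blast
  with m1(1) m2(1,3) show ?thesis by auto
qed

lemma bbisim_append_self_iff:
  assumes "normed Rules"
  shows "bbisim Rules (\<alpha> @ \<gamma>) \<gamma> \<longleftrightarrow> set \<alpha> \<subseteq> Rset Rules \<gamma>"
proof
  assume h: "bbisim Rules (\<alpha> @ \<gamma>) \<gamma>"
  show "set \<alpha> \<subseteq> Rset Rules \<gamma>"
  proof
    fix X assume "X \<in> set \<alpha>"
    then obtain \<alpha>1 \<alpha>2 where \<alpha>: "\<alpha> = \<alpha>1 @ X # \<alpha>2" by (meson split_list)
    have "bbisim Rules ((X # \<alpha>2) @ \<gamma>) \<gamma>"
      using bbisim_collapse[OF assms, of \<alpha>1 "X # \<alpha>2" \<gamma>] h \<alpha> by simp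
    moreover have "bbisim Rules (\<alpha>2 @ \<gamma>) \<gamma>"
      using bbisim_collapse[OF assms, of "\<alpha>1 @ [X]" \<alpha>2 \<gamma>] h \<alpha> by simp
    then have "bbisim Rules ([X] @ \<alpha>2 @ \<gamma>) ([X] @ \<gamma>)" by (rule bbisim_append_left)
    ultimately show "X \<in> Rset Rules \<gamma>"
      unfolding Rset_def by (auto intro: bbisim_trans bbisim_sym)
  qed
next
  show "set \<alpha> \<subseteq> Rset Rules \<gamma> \<Longrightarrow> bbisim Rules (\<alpha> @ \<gamma>) \<gamma>"
  proof (induction \<alpha>)
    case (Cons X \<alpha>)
    then have "bbisim Rules ([X] @ \<alpha> @ \<gamma>) ([X] @ \<gamma>)" "bbisim Rules (X # \<gamma>) \<gamma>"
      by (auto simp: Rset_def simp del: append_Cons append_Nil intro: bbisim_append_left)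
    then show ?case by (auto intro: bbisim_trans)
  qed (simp add: bbisim_refl)
qed

section \<open>Cutting the transitions of \<open>R\<^sup>*\<close>\<close>

lemma tau_path_R_map_append:
  "tau_path (bpa_step_R Rules R) b bs \<Longrightarrow> tau_path (bpa_step Rules) (b @ w) (map (\<lambda>x. x @ w) bs)"
  by (induction bs arbitrary: b) (auto simp: bpa_step_R_def intro: bpa_step_append)

lemma branching_match_R_append:
  assumes "branching_match (bpa_step_R Rules R) B \<alpha> \<beta> a \<alpha>'"
    and "\<And>x y. (x, y) \<in> B \<Longrightarrow> (x @ \<gamma>, y @ \<gamma>) \<in> B'"
  shows "branching_match (bpa_step Rules) B' (\<alpha> @ \<gamma>) (\<beta> @ \<gamma>) a (\<alpha>' @ \<gamma>)"
  using assms(1)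
proof (cases rule: branching_matchE)
  case 1
  then show ?thesis using assms(2) by (simp add: branching_match_tau)
next
  case (2 bs \<beta>')
  show ?thesis
  proof (rule branching_match_path)
    show "tau_path (bpa_step Rules) (\<beta> @ \<gamma>) (map (\<lambda>x. x @ \<gamma>) bs)"
      using 2(1) by (rule tau_path_R_map_append)
    show "bpa_step Rules (last ((\<beta> @ \<gamma>) # map (\<lambda>x. x @ \<gamma>) bs)) a (\<beta>' @ \<gamma>)"
      using 2(2) by (simp only: last_map_append) (simp add: bpa_step_R_def bpa_step_append)
  qed (use 2 assms(2) in auto)
qed

lemma tau_path_R_Nil: "tau_path (bpa_step_R Rules R) [] ts \<Longrightarrow> ts = []"
  by (cases ts) (auto simp: bpa_step_R_def)

lemma bbisim_R_sym: "bbisim_R Rules R s t \<Longrightarrow> bbisim_R Rules R t s"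
  unfolding bbisim_R_def by (rule branching_bisimilar_sym)

lemma bbisim_R_trans: "bbisim_R Rules R s t \<Longrightarrow> bbisim_R Rules R t u \<Longrightarrow> bbisim_R Rules R s u"
  unfolding bbisim_R_def by (rule branching_bisimilar_trans)

lemma bbisim_R_match:
  "bbisim_R Rules R s t \<Longrightarrow> bpa_step_R Rules R s a s' \<Longrightarrow>
   branching_match (bpa_step_R Rules R) {(x, y). bbisim_R Rules R x y} s t a s'"
  unfolding bbisim_R_def by (rule branching_bisimilar_match)

lemma bbisim_R_Nil_step:
  assumes "bbisim_R Rules R s []" "bpa_step_R Rules R s a s'"
  shows "a = Tau" "bbisim_R Rules R s' []"
  using bbisim_R_match[OF assms]
  by (cases rule: branching_matchE; auto dest: tau_path_R_Nil simp: bpa_step_R_def)+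

lemma bbisim_R_stuck:
  assumes "set \<alpha> \<subseteq> R" "set \<beta> \<subseteq> R"
  shows "bbisim_R Rules R \<alpha> \<beta>"
  unfolding bbisim_R_def
proof (rule branching_bisimilarI)
  let ?B = "{(x, y). set x \<subseteq> R \<and> set y \<subseteq> R}"
  show "branching_sim (bpa_step_R Rules R) ?B"
    unfolding branching_sim_def by (auto simp: bpa_step_R_def)
  show "sym ?B" by (auto simp: sym_def)
  show "(\<alpha>, \<beta>) \<in> ?B" using assms by simp
qed

lemma bbisim_R_Nil_tau_path:
  assumes "normed Rules" "bbisim_R Rules R \<alpha> []"
  obtains as where "tau_path (bpa_step_R Rules R) \<alpha> as" "set (last (\<alpha> # as)) \<subseteq> R"
    "\<forall>u \<in> set as. bbisim_R Rules R u []"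
proof -
  have "\<exists>as. tau_path (bpa_step_R Rules R) \<alpha> as \<and> set (last (\<alpha> # as)) \<subseteq> R
     \<and> (\<forall>u \<in> set as. bbisim_R Rules R u [])"
    using normed_moves_Nil[OF assms(1), of \<alpha>] assms(2)
  proof (induction rule: converse_rtranclp_induct)
    case base
    show ?case by (intro exI[of _ "[]"]) simp
  next
    case (step y z)
    show ?case
    proof (cases "set y \<subseteq> R")
      case True
      then show ?thesis by (intro exI[of _ "[]"]) simp
    next
      case False
      with step.hyps(1) obtain a where m: "bpa_step_R Rules R y a z"
        by (auto simp: bpa_step_R_def)
      with step.prems have "a = Tau" "bbisim_R Rules R z []" by (auto dest: bbisim_R_Nil_step)
      with step.IH m show ?thesis by (fastforce intro: exI[of _ "z # _"])
    qed
  qed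
  with that show thesis by blast
qed

lemma bbisim_R_Nil_lifted_tau_path:
  assumes "normed Rules" "bbisim_R Rules (Rset Rules \<gamma>) \<alpha> []"
  obtains as where "tau_path (bpa_step Rules) (\<alpha> @ \<gamma>) (map (\<lambda>u. u @ \<gamma>) as)"
    "bbisim Rules (last (\<alpha> # as) @ \<gamma>) \<gamma>" "\<forall>u \<in> set as. bbisim_R Rules (Rset Rules \<gamma>) u []"
proof -
  from assms obtain as where as: "tau_path (bpa_step_R Rules (Rset Rules \<gamma>)) \<alpha> as"
    "set (last (\<alpha> # as)) \<subseteq> Rset Rules \<gamma>" "\<forall>u \<in> set as. bbisim_R Rules (Rset Rules \<gamma>) u []"
    by (rule bbisim_R_Nil_tau_path)
  from as(2) have "bbisim Rules (last (\<alpha> # as) @ \<gamma>) \<gamma>" by (simp add: bbisim_append_self_iff[OF assms(1)])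
  with tau_path_R_map_append[OF as(1)] as(3) that show thesis by blast
qed

lemma bbisim_R_Nil_imp_bbisim:
  assumes N: "normed Rules" and h: "bbisim_R Rules (Rset Rules \<gamma>) \<alpha> []"
  shows "bbisim Rules (\<alpha> @ \<gamma>) \<gamma>"
proof -
  define R where "R = Rset Rules \<gamma>"
  define P where "P = {(\<alpha> @ \<gamma>, x) | \<alpha> x. bbisim_R Rules R \<alpha> [] \<and> bbisim Rules x \<gamma>}"
  let ?E = "{(x, y). bbisim Rules x y}"
  let ?B = "P \<union> P\<inverse> \<union> ?E"
  have stuck: "bbisim Rules (\<alpha> @ \<gamma>) \<gamma>" if "set \<alpha> \<subseteq> R" for \<alpha>
    using that bbisim_append_self_iff[OF N] unfolding R_def by blast
  have bisimilar_match: "branching_match (bpa_step Rules) ?B x y a x'"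
    if "bbisim Rules x y" "bpa_step Rules x a x'" for x y a x'
    using bbisim_match[OF that] by (rule branching_match_mono) blast
  show ?thesis
  proof (rule bbisimI_union)
    show "sym (P \<union> P\<inverse>)" by (auto simp: sym_def)
    show "(\<alpha> @ \<gamma>, \<gamma>) \<in> P \<union> P\<inverse>"
      using h bbisim_refl unfolding P_def R_def by blast
    fix x y a x' assume xy: "(x, y) \<in> P \<union> P\<inverse>" and m: "bpa_step Rules x a x'"
    show "branching_match (bpa_step Rules) ?B x y a x'"
    proof (cases "(x, y) \<in> P")
      case True
      then obtain \<alpha> where e: "x = \<alpha> @ \<gamma>" "bbisim_R Rules R \<alpha> []" "bbisim Rules y \<gamma>"
        unfolding P_def by blast
      show ?thesis
      proof (cases "set \<alpha> \<subseteq> R")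
        case True
        with e have "bbisim Rules x y" by (blast intro: stuck bbisim_trans bbisim_sym)
        then show ?thesis using m by (rule bisimilar_match)
      next
        case False
        then have "\<alpha> \<noteq> []" by auto
        with m e(1) obtain \<alpha>' where \<alpha>': "x' = \<alpha>' @ \<gamma>" "bpa_step Rules \<alpha> a \<alpha>'"
          by (auto elim: bpa_step_appendE)
        with False have "bpa_step_R Rules R \<alpha> a \<alpha>'" by (simp add: bpa_step_R_def)
        with e(2) have "a = Tau" "bbisim_R Rules R \<alpha>' []" by (auto dest: bbisim_R_Nil_step)
        with \<alpha>'(1) e(3) show ?thesis unfolding P_def by (blast intro: branching_match_tau)
      qed
    next
      case False
      with xy obtain \<alpha> where e: "y = \<alpha> @ \<gamma>" "bbisim_R Rules R \<alpha> []" "bbisim Rules x \<gamma>"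
        unfolding P_def by blast
      obtain as where as: "tau_path (bpa_step Rules) y (map (\<lambda>u. u @ \<gamma>) as)"
        "bbisim Rules (last (\<alpha> # as) @ \<gamma>) \<gamma>" "\<forall>u \<in> set as. bbisim_R Rules R u []"
        using bbisim_R_Nil_lifted_tau_path[OF N e(2)[unfolded R_def]] e(1) unfolding R_def by blast
      have "bbisim Rules x (last (\<alpha> # as) @ \<gamma>)"
        using e(3) as(2) by (blast intro: bbisim_trans bbisim_sym)
      from bisimilar_match[OF this m]
      have "branching_match (bpa_step Rules) ?B x (last (y # map (\<lambda>u. u @ \<gamma>) as)) a x'"
        by (simp only: e(1) last_map_append)
      moreover have "\<forall>u \<in> set (map (\<lambda>u. u @ \<gamma>) as). (x, u) \<in> ?B"
        using as(3) e(3) unfolding P_def by auto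
      ultimately show ?thesis by (rule branching_match_tau_path_prefix[OF as(1), rotated])
    qed
  qed
qed

lemma tau_path_unlift:
  assumes N: "normed Rules"
  shows "tau_path (bpa_step Rules) (\<beta> @ \<gamma>) ts \<Longrightarrow> \<forall>u \<in> set ((\<beta> @ \<gamma>) # ts). \<not> bbisim Rules u \<gamma>
    \<Longrightarrow> \<exists>bs. ts = map (\<lambda>b. b @ \<gamma>) bs \<and> tau_path (bpa_step_R Rules (Rset Rules \<gamma>)) \<beta> bs"
proof (induction ts arbitrary: \<beta>)
  case (Cons u us)
  then have "\<beta> \<noteq> []" using bbisim_refl by fastforce
  with Cons.prems(1) obtain \<beta>1 where \<beta>1: "u = \<beta>1 @ \<gamma>" "bpa_step Rules \<beta> Tau \<beta>1"
    by (auto elim: bpa_step_appendE)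
  have "\<not> set \<beta> \<subseteq> Rset Rules \<gamma>" using Cons.prems(2) bbisim_append_self_iff[OF N] by auto
  with \<beta>1(2) have "bpa_step_R Rules (Rset Rules \<gamma>) \<beta> Tau \<beta>1" by (simp add: bpa_step_R_def)
  moreover obtain bs where "us = map (\<lambda>b. b @ \<gamma>) bs" "tau_path (bpa_step_R Rules (Rset Rules \<gamma>)) \<beta>1 bs"
    using Cons.IH[of \<beta>1] Cons.prems \<beta>1(1) by auto
  ultimately show ?case using \<beta>1(1) by (intro exI[of _ "\<beta>1 # bs"]) simp
qed simp

lemma bbisim_imp_bbisim_R:
  assumes N: "normed Rules" and h: "bbisim Rules (\<alpha> @ \<gamma>) (\<beta> @ \<gamma>)"
  shows "bbisim_R Rules (Rset Rules \<gamma>) \<alpha> \<beta>"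
  unfolding bbisim_R_def
proof (rule branching_bisimilarI)
  let ?R = "Rset Rules \<gamma>"
  let ?B = "{(\<alpha>, \<beta>). bbisim Rules (\<alpha> @ \<gamma>) (\<beta> @ \<gamma>)}"
  show "sym ?B" by (auto simp: sym_def intro: bbisim_sym)
  show "(\<alpha>, \<beta>) \<in> ?B" using h by simp
  show "branching_sim (bpa_step_R Rules ?R) ?B"
    unfolding branching_sim_iff_match
  proof (intro allI impI)
    fix \<alpha> \<beta> a \<alpha>' assume "(\<alpha>, \<beta>) \<in> ?B" and m: "bpa_step_R Rules ?R \<alpha> a \<alpha>'"
    then have ab: "bbisim Rules (\<alpha> @ \<gamma>) (\<beta> @ \<gamma>)" by simp
    from m have not_collapsed: "\<not> bbisim Rules (\<alpha> @ \<gamma>) \<gamma>"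
      and step: "bpa_step Rules (\<alpha> @ \<gamma>) a (\<alpha>' @ \<gamma>)"
      by (auto simp: bpa_step_R_def bbisim_append_self_iff[OF N] intro: bpa_step_append)
    from bbisim_match[OF ab step]
    show "branching_match (bpa_step_R Rules ?R) ?B \<alpha> \<beta> a \<alpha>'"
    proof (cases rule: branching_matchE)
      case 1
      then show ?thesis by (simp add: branching_match_tau)
    next
      case (2 ts t')
      have above: "\<forall>u \<in> set ((\<beta> @ \<gamma>) # ts). \<not> bbisim Rules u \<gamma>"
        using 2(4) ab not_collapsed by (auto intro: bbisim_trans)
      from tau_path_unlift[OF N 2(1) this] obtain bs where bs: "ts = map (\<lambda>b. b @ \<gamma>) bs"
        "tau_path (bpa_step_R Rules ?R) \<beta> bs" by blast
      define l where "l = last (\<beta> # bs)"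
      have last_ts: "last ((\<beta> @ \<gamma>) # ts) = l @ \<gamma>"
        unfolding bs(1) l_def by (rule last_map_append)
      then have "\<not> bbisim Rules (l @ \<gamma>) \<gamma>" using above by (metis last_in_set list.discI)
      then have "l \<noteq> []" "\<not> set l \<subseteq> ?R"
        using bbisim_refl bbisim_append_self_iff[OF N] by fastforce+
      with 2(2) last_ts obtain \<beta>' where \<beta>': "t' = \<beta>' @ \<gamma>" "bpa_step Rules l a \<beta>'"
        by (auto elim: bpa_step_appendE)
      show ?thesis
      proof (rule branching_match_path[OF bs(2)])
        show "bpa_step_R Rules ?R (last (\<beta> # bs)) a \<beta>'"
          using \<beta>'(2) \<open>\<not> set l \<subseteq> ?R\<close> unfolding l_def by (simp add: bpa_step_R_def)
      qed (use 2(3,4) bs(1) \<beta>'(1) in auto)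
    qed
  qed
qed

lemma bbisim_R_imp_bbisim:
  assumes N: "normed Rules" and h: "bbisim_R Rules (Rset Rules \<gamma>) \<alpha> \<beta>"
  shows "bbisim Rules (\<alpha> @ \<gamma>) (\<beta> @ \<gamma>)"
proof -
  define R where "R = Rset Rules \<gamma>"
  define Q where "Q = {(\<alpha> @ \<gamma>, \<beta> @ \<gamma>) | \<alpha> \<beta>. bbisim_R Rules R \<alpha> \<beta> \<and> \<not> bbisim_R Rules R \<alpha> []}"
  let ?E = "{(x, y). bbisim Rules x y}"
  have lift: "(\<alpha> @ \<gamma>, \<beta> @ \<gamma>) \<in> Q \<union> ?E" if "bbisim_R Rules R \<alpha> \<beta>" for \<alpha> \<beta>
  proof (cases "bbisim_R Rules R \<alpha> []")
    case True
    with that have "bbisim_R Rules R \<beta> []" by (blast intro: bbisim_R_trans bbisim_R_sym)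
    with True have "bbisim Rules (\<alpha> @ \<gamma>) \<gamma>" "bbisim Rules (\<beta> @ \<gamma>) \<gamma>"
      using bbisim_R_Nil_imp_bbisim[OF N] unfolding R_def by blast+
    then show ?thesis by (blast intro: bbisim_trans bbisim_sym)
  next
    case False
    with that show ?thesis unfolding Q_def by blast
  qed
  have "bbisim Rules x y" if "(x, y) \<in> Q" for x y
  proof (rule bbisimI_union[OF _ that])
    show "sym Q"
      unfolding Q_def sym_def by (blast intro: bbisim_R_sym bbisim_R_trans)
    fix u v a u' assume "(u, v) \<in> Q" and m: "bpa_step Rules u a u'"
    then obtain \<alpha> \<beta> where e: "u = \<alpha> @ \<gamma>" "v = \<beta> @ \<gamma>" "bbisim_R Rules R \<alpha> \<beta>"
      "\<not> bbisim_R Rules R \<alpha> []" unfolding Q_def by blast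
    from e(4) have "\<not> set \<alpha> \<subseteq> R" using bbisim_R_stuck[of \<alpha> R "[]" Rules] by auto
    then have "\<alpha> \<noteq> []" by auto
    with m e(1) obtain \<alpha>' where \<alpha>': "u' = \<alpha>' @ \<gamma>" "bpa_step Rules \<alpha> a \<alpha>'"
      by (auto elim: bpa_step_appendE)
    with \<open>\<not> set \<alpha> \<subseteq> R\<close> have "bpa_step_R Rules R \<alpha> a \<alpha>'" by (simp add: bpa_step_R_def)
    from branching_match_R_append[OF bbisim_R_match[OF e(3) this], of \<gamma> "Q \<union> ?E"]
    show "branching_match (bpa_step Rules) (Q \<union> ?E) u v a u'"
      using lift e(1,2) \<alpha>'(1) by blast
  qed
  with lift[OF h[folded R_def]] show ?thesis by blast
qed

theorem bbisim_R_Rset_iff: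
  assumes "normed Rules"
  shows "bbisim_R Rules (Rset Rules \<gamma>) \<alpha> \<beta> \<longleftrightarrow> bbisim Rules (\<alpha> @ \<gamma>) (\<beta> @ \<gamma>)"
  using bbisim_imp_bbisim_R[OF assms] bbisim_R_imp_bbisim[OF assms] by blast

section \<open>Lexicographically least longest strings\<close>

lemma lex_less_iff_rev_less:
  assumes "length x = length y"
  shows "lex_less x y \<longleftrightarrow> rev x < rev y"
proof
  assume "lex_less x y"
  then show "rev x < rev y"
    unfolding lex_less_def
  proof (elim disjE exE conjE)
    fix d assume "d \<noteq> []" "y = d @ x" then show ?thesis using assms by simp
  next
    fix a' b' A B g assume h: "x = a' @ A # g" "y = b' @ B # g" "A < B"
    show ?thesis unfolding list_less_def lexord_def using h
      by (intro CollectI) (simp, metis append_Cons append_Nil append_assoc)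
  qed
next
  assume "rev x < rev y"
  then have "(rev x, rev y) \<in> lexord {(u, v). u < v}" unfolding list_less_def .
  then have "(\<exists>a v. rev y = rev x @ a # v) \<or>
            (\<exists> u a b v w. a < b \<and> rev x = u @ (a # v) \<and> rev y = u @ (b # w))"
    unfolding lexord_def by blast
  then show "lex_less x y"
  proof
    assume "\<exists>a v. rev y = rev x @ a # v"
    then obtain a v where "rev y = rev x @ a # v" by blast
    then have "length y > length x" by (metis length_append length_rev list.size(4) add_Suc_right less_add_Suc1)
    then show ?thesis using assms by simp
  next
    assume "\<exists> u a b v w. a < b \<and> rev x = u @ (a # v) \<and> rev y = u @ (b # w)"
    then obtain u a b v w where h: "a < b" "rev x = u @ (a # v)" "rev y = u @ (b # w)" by auto
    then have "x = rev v @ a # rev u" "y = rev w @ b # rev u" by (metis rev_append rev_rev_ident rev.simps(2) append_assoc append_Cons append_Nil)+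
    then show ?thesis unfolding lex_less_def using h(1) by blast
  qed
qed

lemma lex_less_append_right:
  assumes "lex_less x y"
  shows "lex_less (x @ z) (y @ z)"
  using assms unfolding lex_less_def
proof (elim disjE exE conjE)
  fix \<delta> assume "\<delta> \<noteq> []" "y = \<delta> @ x"
  then show "(\<exists>\<delta>. \<delta> \<noteq> [] \<and> y @ z = \<delta> @ x @ z) \<or>
    (\<exists>\<alpha>' \<beta>' A B \<gamma>. x @ z = \<alpha>' @ A # \<gamma> \<and> y @ z = \<beta>' @ B # \<gamma> \<and> A < B)" by simp
next
  fix \<alpha>' \<beta>' A B \<gamma> assume "x = \<alpha>' @ A # \<gamma>" "y = \<beta>' @ B # \<gamma>" "A < B"
  then show "(\<exists>\<delta>. \<delta> \<noteq> [] \<and> y @ z = \<delta> @ x @ z) \<or>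
    (\<exists>\<alpha>' \<beta>' A B \<gamma>. x @ z = \<alpha>' @ A # \<gamma> \<and> y @ z = \<beta>' @ B # \<gamma> \<and> A < B)" by auto
qed

lemma lex_less_append_left:
  assumes "lex_less x y" "length x = length y"
  shows "lex_less (w @ x) (v @ y)"
proof -
  from assms obtain \<alpha>' \<beta>' A B \<gamma> where "x = \<alpha>' @ A # \<gamma>" "y = \<beta>' @ B # \<gamma>" "A < B"
    unfolding lex_less_def by auto
  then show ?thesis unfolding lex_less_def by (metis append.assoc)
qed

lemma lex_less_append:
  assumes "length c = length c'" "d' = d \<or> lex_less d d'" "c' = c \<or> lex_less c c'"
  shows "d' @ c' = d @ c \<or> lex_less (d @ c) (d' @ c')"
  using assms(2,3) lex_less_append_right lex_less_append_left[OF _ assms(1)] by blast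

definition least_longest :: "'v::linorder list set \<Rightarrow> 'v list \<Rightarrow> bool" where
  "least_longest S x \<longleftrightarrow> x \<in> S \<and> (\<forall>\<beta> \<in> S. length \<beta> \<le> length x)
     \<and> (\<forall>\<beta> \<in> S. length \<beta> = length x \<longrightarrow> \<beta> = x \<or> lex_less x \<beta>)"

lemma least_longest_unique: "least_longest S x \<Longrightarrow> least_longest S y \<Longrightarrow> x = y"
  unfolding least_longest_def by (metis le_antisym lex_less_iff_rev_less less_asym)

lemma longest_exists:
  assumes "S \<noteq> {}" "\<forall>\<delta> \<in> S. length \<delta> \<le> n"
  obtains x where "x \<in> S" "\<forall>\<delta> \<in> S. length \<delta> \<le> length x"
proof -
  have "finite (length ` S)" using assms(2) by (meson finite_atMost finite_subset image_subsetI atMost_iff)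
  with assms(1) have "Max (length ` S) \<in> length ` S" "\<forall>\<delta> \<in> S. length \<delta> \<le> Max (length ` S)"
    by auto
  then show thesis using that by auto
qed

lemma least_longest_exists:
  fixes S :: "'v::{finite,linorder} list set"
  assumes "S \<noteq> {}" "\<forall>\<delta> \<in> S. length \<delta> \<le> n"
  obtains x where "least_longest S x"
proof -
  obtain x0 where x0: "x0 \<in> S" "\<forall>\<delta> \<in> S. length \<delta> \<le> length x0"
    using longest_exists[OF assms] .
  define S' where "S' = {x \<in> S. length x = length x0}"
  have "S' \<subseteq> {xs. set xs \<subseteq> UNIV \<and> length xs = length x0}" unfolding S'_def by blast
  then have fin: "finite (rev ` S')"
    using finite_lists_length_eq[OF finite_UNIV, of "length x0"] by (blast intro: finite_subset)
  have "rev ` S' \<noteq> {}" using x0(1) unfolding S'_def by blast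
  with fin obtain x where x: "x \<in> S'" "rev x = Min (rev ` S')"
    by (metis Min_in imageE)
  have "least_longest S x"
    unfolding least_longest_def
  proof (intro conjI ballI impI)
    show "x \<in> S" using x(1) unfolding S'_def by simp
  next
    fix \<beta> assume "\<beta> \<in> S"
    then show "length \<beta> \<le> length x" using x(1) x0(2) unfolding S'_def by simp
  next
    fix \<beta> assume \<beta>: "\<beta> \<in> S" "length \<beta> = length x"
    with x(1) have "\<beta> \<in> S'" unfolding S'_def by simp
    with fin x(2) have "rev x \<le> rev \<beta>" by simp
    then show "\<beta> = x \<or> lex_less x \<beta>"
      using lex_less_iff_rev_less[of x \<beta>] \<beta>(2) by (metis order_le_less rev_rev_ident)
  qed
  then show thesis by (rule that)
qed

section \<open>Candidates\<close>

definition candidates :: "('v \<times> 'a act \<times> 'v list) set \<Rightarrow> 'v list \<Rightarrow> 'v list \<Rightarrow> 'v list set" where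
  "candidates Rules \<alpha> \<gamma> = {\<delta>. bbisim Rules (\<delta> @ \<gamma>) (\<alpha> @ \<gamma>) \<and> redundancy_free Rules \<delta> \<gamma>}"

lemma canon_out_eq_least_longest:
  "canon_out Rules \<gamma> A = (THE x. least_longest (candidates Rules [A] \<gamma>) x)"
  unfolding canon_out_def least_longest_def out_candidates_def candidates_def by simp

lemma redundancy_free_Rset_cong:
  assumes "normed Rules" "Rset Rules \<gamma> = Rset Rules \<gamma>'"
  shows "redundancy_free Rules \<delta> \<gamma> \<longleftrightarrow> redundancy_free Rules \<delta> \<gamma>'"
  unfolding redundancy_free_def
  using bbisim_R_Rset_iff[OF assms(1), of \<gamma>] bbisim_R_Rset_iff[OF assms(1), of \<gamma>'] assms(2)
  by (metis append_Cons)

lemma candidates_Rset_cong: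
  assumes "normed Rules" "Rset Rules \<gamma> = Rset Rules \<gamma>'"
  shows "candidates Rules \<alpha> \<gamma> = candidates Rules \<alpha> \<gamma>'"
  unfolding candidates_def
  using redundancy_free_Rset_cong[OF assms] bbisim_R_Rset_iff[OF assms(1), of \<gamma>]
    bbisim_R_Rset_iff[OF assms(1), of \<gamma>'] assms(2)
  by auto

lemma redundancy_free_bbisim:
  "bbisim Rules w w' \<Longrightarrow> redundancy_free Rules \<sigma> w \<Longrightarrow> redundancy_free Rules \<sigma> w'"
proof (induction \<sigma>)
  case (Cons X \<sigma>)
  have "bbisim Rules ((X # \<sigma>) @ w) ((X # \<sigma>) @ w')" "bbisim Rules (\<sigma> @ w) (\<sigma> @ w')"
    using Cons.prems(1) by (blast intro: bbisim_append_left)+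
  with Cons show ?case by (auto simp: redundancy_free_Cons intro: bbisim_trans bbisim_sym)
qed simp

lemma redundancy_free_reduct:
  "\<exists>\<sigma>'. bbisim Rules (\<sigma>' @ w) (\<sigma> @ w) \<and> redundancy_free Rules \<sigma>' w"
proof (induction "length \<sigma>" arbitrary: \<sigma> rule: less_induct)
  case less
  show ?case
  proof (cases "redundancy_free Rules \<sigma> w")
    case True
    then show ?thesis using bbisim_refl by blast
  next
    case False
    then obtain \<delta> X \<beta> where \<sigma>: "\<sigma> = \<delta> @ X # \<beta>" "bbisim Rules (X # \<beta> @ w) (\<beta> @ w)"
      unfolding redundancy_free_def by blast
    then have "length (\<delta> @ \<beta>) < length \<sigma>" by simp
    then obtain \<sigma>' where \<sigma>': "bbisim Rules (\<sigma>' @ w) (\<delta> @ \<beta> @ w)" "redundancy_free Rules \<sigma>' w"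
      using less.hyps by fastforce
    have "bbisim Rules (\<delta> @ \<beta> @ w) (\<sigma> @ w)"
      using bbisim_append_left[OF bbisim_sym[OF \<sigma>(2)]] \<sigma>(1) by simp
    with \<sigma>' show ?thesis by (blast intro: bbisim_trans)
  qed
qed

lemma candidates_length_bounded:
  assumes "normed Rules"
  obtains n where "\<forall>\<delta> \<in> candidates Rules \<alpha> \<gamma>. length \<delta> \<le> n"
proof -
  obtain n where n: "branching_norm_le Rules (\<alpha> @ \<gamma>) n"
    using normed_branching_norm_le[OF assms] .
  have "length \<delta> \<le> n" if "\<delta> \<in> candidates Rules \<alpha> \<gamma>" for \<delta>
  proof -
    have "branching_norm_le Rules (\<delta> @ \<gamma>) n"
      using branching_norm_le_bbisim[OF assms n] that bbisim_sym unfolding candidates_def by blast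
    with that show ?thesis
      using redundancy_free_norm_bound unfolding candidates_def by fastforce
  qed
  then show thesis using that by blast
qed

lemma candidates_Nil:
  assumes "normed Rules"
  shows "candidates Rules [] \<gamma> = {[]}"
proof -
  have "\<delta> = []" if "\<delta> \<in> candidates Rules [] \<gamma>" for \<delta>
  proof (cases \<delta>)
    case (Cons X \<beta>)
    with that have h: "bbisim Rules (X # \<beta> @ \<gamma>) \<gamma>" "redundancy_free Rules (X # \<beta>) \<gamma>"
      unfolding candidates_def by auto
    have "bbisim Rules (\<beta> @ \<gamma>) \<gamma>" using bbisim_collapse[OF assms, of "[X]" \<beta> \<gamma>] h(1) by simp
    with h show ?thesis by (auto simp: redundancy_free_Cons intro: bbisim_trans bbisim_sym)
  qed
  then show ?thesis by (auto simp: candidates_def bbisim_refl)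
qed

lemma canon_out_least_longest:
  fixes Rules :: "('v::{finite,linorder} \<times> 'a act \<times> 'v list) set"
  assumes "normed Rules"
  shows "least_longest (candidates Rules [A] \<gamma>) (canon_out Rules \<gamma> A)"
proof -
  have "candidates Rules [A] \<gamma> \<noteq> {}"
  proof (cases "bbisim Rules (A # \<gamma>) \<gamma>")
    case True
    then have "[] \<in> candidates Rules [A] \<gamma>" unfolding candidates_def by (simp add: bbisim_sym)
    then show ?thesis by blast
  next
    case False
    then have "[A] \<in> candidates Rules [A] \<gamma>"
      unfolding candidates_def by (simp add: bbisim_refl redundancy_free_Cons)
    then show ?thesis by blast
  qed
  moreover obtain n where "\<forall>\<delta> \<in> candidates Rules [A] \<gamma>. length \<delta> \<le> n"
    using candidates_length_bounded[OF assms] .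
  ultimately obtain x where "least_longest (candidates Rules [A] \<gamma>) x"
    by (rule least_longest_exists)
  then show ?thesis
    unfolding canon_out_eq_least_longest by (auto intro: theI least_longest_unique)
qed

section \<open>Longest candidates split\<close>

abbreviation bpa_moves_within :: "('v \<times> 'a act \<times> 'v list) set \<Rightarrow> 'v list set \<Rightarrow> 'v list \<Rightarrow> 'v list \<Rightarrow> bool"
  where "bpa_moves_within Rules Q \<equiv> (\<lambda>x y. (\<exists>a. bpa_step Rules x a y) \<and> y \<in> Q)\<^sup>*\<^sup>*"

lemma tau_path_moves_within:
  "tau_path (bpa_step Rules) t ts \<Longrightarrow> set ts \<subseteq> Q \<Longrightarrow> bpa_moves_within Rules Q t (last (t # ts))"
proof (induction ts arbitrary: t)
  case (Cons u us)
  then have "bpa_moves_within Rules Q u (last (u # us))" "(\<exists>a. bpa_step Rules t a u) \<and> u \<in> Q"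
    by auto
  then show ?case by (auto intro: converse_rtranclp_into_rtranclp)
qed simp

lemma bpa_moves_within_bbisim:
  assumes "bpa_moves_within Rules P s s'" "s \<in> P" "bbisim Rules s t"
  obtains t' where "bbisim Rules s' t'" "bpa_moves_within Rules {z. \<exists>p \<in> P. bbisim Rules p z} t t'"
proof -
  let ?P = "{z. \<exists>p \<in> P. bbisim Rules p z}"
  have "\<exists>t'. bbisim Rules s' t' \<and> bpa_moves_within Rules ?P t t'"
    using assms
  proof (induction arbitrary: t rule: converse_rtranclp_induct)
    case base
    then show ?case by blast
  next
    case (step y z)
    then obtain a where m: "bpa_step Rules y a z" and "z \<in> P" by blast
    from bbisim_match[OF step.prems(2) m] show ?case
    proof (cases rule: branching_matchE)
      case 1
      with step.IH \<open>z \<in> P\<close> show ?thesis by simp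
    next
      case (2 ts t1)
      have "set ts \<subseteq> ?P" using 2(4) step.prems(1) by blast
      then have "bpa_moves_within Rules ?P t (last (t # ts))" by (rule tau_path_moves_within[OF 2(1)])
      moreover have "t1 \<in> ?P" using \<open>z \<in> P\<close> 2(3) by blast
      ultimately have "bpa_moves_within Rules ?P t t1"
        using 2(2) by (blast intro: rtranclp.rtrancl_into_rtrancl)
      moreover obtain t' where "bbisim Rules s' t'" "bpa_moves_within Rules ?P t1 t'"
        using step.IH[OF \<open>z \<in> P\<close>] 2(3) by auto
      ultimately show ?thesis by (blast intro: rtranclp_trans)
    qed
  qed
  then show thesis using that by blast
qed

text \<open>Y is the variable of \<open>\<sigma>\<close> that is being consumed at u.\<close>

lemma bpa_moves_within_split:
  assumes "bpa_moves_within Rules Q (\<sigma> @ w) u" "\<sigma> @ w \<in> Q"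
  shows "w \<in> Q \<or> (\<exists>\<sigma>1 Y \<sigma>2 \<mu>. \<sigma> = \<sigma>1 @ Y # \<sigma>2 \<and> \<mu> \<noteq> [] \<and> u = \<mu> @ \<sigma>2 @ w \<and> Y # \<sigma>2 @ w \<in> Q)"
  using assms(1)
proof (induction rule: rtranclp_induct)
  case base
  show ?case
  proof (cases \<sigma>)
    case Nil
    then show ?thesis using assms(2) by simp
  next
    case (Cons Y \<sigma>2)
    then show ?thesis using assms(2) by (intro disjI2 exI[of _ "[]"] exI[of _ "[Y]"]) auto
  qed
next
  case (step u u')
  from step.IH show ?case
  proof (elim disjE exE conjE)
    fix \<sigma>1 Y \<sigma>2 \<mu> assume h: "\<sigma> = \<sigma>1 @ Y # \<sigma>2" "\<mu> \<noteq> []" "u = \<mu> @ \<sigma>2 @ w" "Y # \<sigma>2 @ w \<in> Q"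
    from step.hyps(2) h(2,3) obtain a \<mu>' where "u' = \<mu>' @ \<sigma>2 @ w" "u' \<in> Q"
      by (auto elim: bpa_step_appendE)
    show ?thesis
    proof (cases "\<mu>' = []")
      case False
      with h(1,4) \<open>u' = \<mu>' @ \<sigma>2 @ w\<close> show ?thesis by blast
    next
      case True
      show ?thesis
      proof (cases \<sigma>2)
        case Nil
        with True \<open>u' = \<mu>' @ \<sigma>2 @ w\<close> \<open>u' \<in> Q\<close> show ?thesis by simp
      next
        case (Cons Y' \<sigma>2')
        with True h(1) \<open>u' = \<mu>' @ \<sigma>2 @ w\<close> \<open>u' \<in> Q\<close> show ?thesis
          by (intro disjI2 exI[of _ "\<sigma>1 @ [Y]"] exI[of _ Y'] exI[of _ \<sigma>2'] exI[of _ "[Y']"]) auto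
      qed
    qed
  qed simp
qed

lemma bpa_moves_within_append:
  "bpa_moves Rules x y \<Longrightarrow> bpa_moves_within Rules {\<nu> @ w | \<nu>. bpa_moves Rules x \<nu>} (x @ w) (y @ w)"
proof (induction rule: rtranclp_induct)
  case (step y z)
  then have "(\<exists>a. bpa_step Rules (y @ w) a (z @ w)) \<and> z @ w \<in> {\<nu> @ w | \<nu>. bpa_moves Rules x \<nu>}"
    by (blast intro: bpa_step_append rtranclp.rtrancl_into_rtrancl)
  with step.IH show ?case by (rule rtranclp.rtrancl_into_rtrancl)
qed simp

text \<open>Replacing Y by redundancy-free reducts of \<open>\<nu>\<close> and \<open>\<mu>\<close>, both non-empty,
  lengthens the candidate.\<close>

lemma candidate_longer:
  assumes N: "normed Rules" and \<delta>: "\<sigma>1 @ Y # \<sigma>2 \<in> candidates Rules \<alpha> \<gamma>"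
    and \<nu>: "bbisim Rules (\<nu> @ A # \<gamma>) (Y # \<sigma>2 @ \<gamma>)" and \<mu>: "bbisim Rules (\<mu> @ \<sigma>2 @ \<gamma>) (A # \<gamma>)"
    and not_\<sigma>2: "\<not> bbisim Rules (\<sigma>2 @ \<gamma>) (A # \<gamma>)" and not_\<nu>: "\<not> bbisim Rules (\<nu> @ A # \<gamma>) (A # \<gamma>)"
  obtains \<delta>' where "\<delta>' \<in> candidates Rules \<alpha> \<gamma>" "length (\<sigma>1 @ Y # \<sigma>2) < length \<delta>'"
proof -
  let ?v = "\<sigma>2 @ \<gamma>"
  obtain \<mu>' where \<mu>': "bbisim Rules (\<mu>' @ ?v) (\<mu> @ ?v)" "redundancy_free Rules \<mu>' ?v"
    using redundancy_free_reduct by blast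
  obtain \<nu>' where \<nu>': "bbisim Rules (\<nu>' @ \<mu>' @ ?v) (\<nu> @ \<mu>' @ ?v)" "redundancy_free Rules \<nu>' (\<mu>' @ ?v)"
    using redundancy_free_reduct by blast
  have \<mu>'A: "bbisim Rules (\<mu>' @ ?v) (A # \<gamma>)" using \<mu>'(1) \<mu> by (rule bbisim_trans)
  then have "\<mu>' \<noteq> []" using not_\<sigma>2 by auto
  have \<nu>A: "bbisim Rules (\<nu> @ \<mu>' @ ?v) (\<nu> @ A # \<gamma>)" using \<mu>'A by (rule bbisim_append_left)
  have "\<nu>' \<noteq> []"
  proof
    assume "\<nu>' = []"
    with \<nu>'(1) \<nu>A \<mu>'A have "bbisim Rules (\<nu> @ A # \<gamma>) (A # \<gamma>)"
      by (metis append_Nil bbisim_sym bbisim_trans)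
    with not_\<nu> show False ..
  qed
  have core: "bbisim Rules ((\<nu>' @ \<mu>' @ \<sigma>2) @ \<gamma>) (Y # ?v)"
    using bbisim_trans[OF bbisim_trans[OF \<nu>'(1) \<nu>A] \<nu>] by simp
  define \<delta>' where "\<delta>' = \<sigma>1 @ \<nu>' @ \<mu>' @ \<sigma>2"
  have "bbisim Rules (\<delta>' @ \<gamma>) ((\<sigma>1 @ Y # \<sigma>2) @ \<gamma>)"
    using bbisim_append_left[OF core, of \<sigma>1] unfolding \<delta>'_def by simp
  moreover have "redundancy_free Rules \<delta>' \<gamma>"
  proof -
    have "redundancy_free Rules \<sigma>1 (Y # ?v)" "redundancy_free Rules \<sigma>2 \<gamma>"
      using \<delta> by (auto simp: candidates_def redundancy_free_append redundancy_free_Cons)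
    then show ?thesis
      using \<nu>'(2) \<mu>'(2) redundancy_free_bbisim[OF bbisim_sym[OF core]]
      unfolding \<delta>'_def by (simp add: redundancy_free_append)
  qed
  ultimately have "\<delta>' \<in> candidates Rules \<alpha> \<gamma>"
    using \<delta> unfolding candidates_def by (auto intro: bbisim_trans)
  moreover have "length (\<sigma>1 @ Y # \<sigma>2) < length \<delta>'"
    using \<open>\<mu>' \<noteq> []\<close> \<open>\<nu>' \<noteq> []\<close> unfolding \<delta>'_def by (cases \<nu>'; cases \<mu>') auto
  ultimately show thesis by (rule that)
qed

text \<open>Follow the path from \<open>\<alpha>' @ A # \<gamma>\<close> down to \<open>A # \<gamma>\<close> (it exists by
  normedness) from the bisimilar process \<open>\<delta> @ \<gamma>\<close>, and look at the variable of \<open>\<delta>\<close>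
  being consumed when the mirrored path reaches a process bisimilar to \<open>A # \<gamma>\<close>.\<close>

lemma candidate_split_or_longer:
  assumes N: "normed Rules" and \<delta>: "\<delta> \<in> candidates Rules (\<alpha>' @ [A]) \<gamma>"
  shows "(\<exists>\<delta>1 \<delta>2. \<delta> = \<delta>1 @ \<delta>2 \<and> bbisim Rules (\<delta>2 @ \<gamma>) (A # \<gamma>)) \<or>
    (\<exists>\<delta>' \<in> candidates Rules (\<alpha>' @ [A]) \<gamma>. length \<delta> < length \<delta>')"
proof -
  have \<delta>\<alpha>: "bbisim Rules (\<alpha>' @ A # \<gamma>) (\<delta> @ \<gamma>)"
    using \<delta> unfolding candidates_def by (auto intro: bbisim_sym)
  define P where "P = {\<nu> @ A # \<gamma> | \<nu>. bpa_moves Rules \<alpha>' \<nu>}"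
  let ?P = "{z. \<exists>p \<in> P. bbisim Rules p z}"
  have "\<alpha>' @ A # \<gamma> \<in> P" unfolding P_def by blast
  moreover have "bpa_moves_within Rules P (\<alpha>' @ A # \<gamma>) ([] @ A # \<gamma>)"
    unfolding P_def by (rule bpa_moves_within_append[OF normed_moves_Nil[OF N]])
  ultimately obtain t' where t': "bbisim Rules (A # \<gamma>) t'" "bpa_moves_within Rules ?P (\<delta> @ \<gamma>) t'"
    using \<delta>\<alpha> by (auto elim: bpa_moves_within_bbisim)
  have "\<delta> @ \<gamma> \<in> ?P" using \<open>\<alpha>' @ A # \<gamma> \<in> P\<close> \<delta>\<alpha> by blast
  from bpa_moves_within_split[OF t'(2) this] show ?thesis
  proof (elim disjE exE conjE)
    assume "\<gamma> \<in> ?P"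
    then obtain \<nu> where "bbisim Rules (\<nu> @ [A] @ \<gamma>) \<gamma>" unfolding P_def by auto
    from bbisim_collapse[OF N this] have "bbisim Rules ([] @ \<gamma>) (A # \<gamma>)"
      by (simp add: bbisim_sym)
    then show ?thesis by blast
  next
    fix \<sigma>1 Y \<sigma>2 \<mu> assume h: "\<delta> = \<sigma>1 @ Y # \<sigma>2" "t' = \<mu> @ \<sigma>2 @ \<gamma>" "Y # \<sigma>2 @ \<gamma> \<in> ?P"
    then obtain \<nu> where \<nu>: "bbisim Rules (\<nu> @ A # \<gamma>) (Y # \<sigma>2 @ \<gamma>)" unfolding P_def by blast
    have \<mu>: "bbisim Rules (\<mu> @ \<sigma>2 @ \<gamma>) (A # \<gamma>)" using t'(1) h(2) by (simp add: bbisim_sym)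
    consider "bbisim Rules (\<sigma>2 @ \<gamma>) (A # \<gamma>)" | "bbisim Rules (\<nu> @ A # \<gamma>) (A # \<gamma>)"
      | "\<not> bbisim Rules (\<sigma>2 @ \<gamma>) (A # \<gamma>)" "\<not> bbisim Rules (\<nu> @ A # \<gamma>) (A # \<gamma>)"
      by blast
    then show ?thesis
    proof cases
      case 1
      then show ?thesis using h(1) by (intro disjI1 exI[of _ "\<sigma>1 @ [Y]"] exI[of _ \<sigma>2]) simp
    next
      case 2
      then have "bbisim Rules ((Y # \<sigma>2) @ \<gamma>) (A # \<gamma>)"
        using \<nu> by (auto intro: bbisim_trans bbisim_sym)
      then show ?thesis using h(1) by blast
    next
      case 3
      with candidate_longer[OF N \<delta>[unfolded h(1)] \<nu> \<mu>] show ?thesis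
        unfolding h(1) by blast
    qed
  qed
qed

lemma candidates_append:
  assumes "\<delta>1 \<in> candidates Rules \<alpha> (A # \<gamma>)" "\<delta>2 \<in> candidates Rules [A] \<gamma>"
  shows "\<delta>1 @ \<delta>2 \<in> candidates Rules (\<alpha> @ [A]) \<gamma>"
proof -
  have \<delta>2: "bbisim Rules (\<delta>2 @ \<gamma>) (A # \<gamma>)" "redundancy_free Rules \<delta>2 \<gamma>"
    using assms(2) unfolding candidates_def by auto
  have "bbisim Rules (\<delta>1 @ \<delta>2 @ \<gamma>) (\<delta>1 @ A # \<gamma>)" using \<delta>2(1) by (rule bbisim_append_left)
  then have "bbisim Rules (\<delta>1 @ \<delta>2 @ \<gamma>) (\<alpha> @ A # \<gamma>)"
    using assms(1) unfolding candidates_def by (auto intro: bbisim_trans)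
  moreover have "redundancy_free Rules \<delta>1 (\<delta>2 @ \<gamma>)"
    using assms(1) redundancy_free_bbisim[OF bbisim_sym[OF \<delta>2(1)]] unfolding candidates_def by blast
  ultimately show ?thesis using \<delta>2(2) unfolding candidates_def by (simp add: redundancy_free_append)
qed

lemma candidates_append_split:
  assumes "\<delta>1 @ \<delta>2 \<in> candidates Rules (\<alpha> @ [A]) \<gamma>" "bbisim Rules (\<delta>2 @ \<gamma>) (A # \<gamma>)"
  shows "\<delta>1 \<in> candidates Rules \<alpha> (A # \<gamma>)" "\<delta>2 \<in> candidates Rules [A] \<gamma>"
proof -
  have h: "bbisim Rules (\<delta>1 @ \<delta>2 @ \<gamma>) (\<alpha> @ A # \<gamma>)"
    "redundancy_free Rules \<delta>1 (\<delta>2 @ \<gamma>)" "redundancy_free Rules \<delta>2 \<gamma>"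
    using assms(1) unfolding candidates_def by (auto simp: redundancy_free_append)
  have "bbisim Rules (\<delta>1 @ A # \<gamma>) (\<delta>1 @ \<delta>2 @ \<gamma>)"
    using bbisim_sym[OF assms(2)] by (rule bbisim_append_left)
  from this h(1) have "bbisim Rules (\<delta>1 @ A # \<gamma>) (\<alpha> @ A # \<gamma>)" by (rule bbisim_trans)
  with h(2) assms(2) show "\<delta>1 \<in> candidates Rules \<alpha> (A # \<gamma>)"
    unfolding candidates_def by (simp add: redundancy_free_bbisim)
  show "\<delta>2 \<in> candidates Rules [A] \<gamma>" using assms(2) h(3) unfolding candidates_def by simp
qed

lemma longest_candidate_split:
  assumes "normed Rules" "\<delta> \<in> candidates Rules (\<alpha> @ [A]) \<gamma>"
    and "\<forall>\<delta>' \<in> candidates Rules (\<alpha> @ [A]) \<gamma>. length \<delta>' \<le> length \<delta>"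
  obtains \<delta>1 \<delta>2 where "\<delta> = \<delta>1 @ \<delta>2" "\<delta>1 \<in> candidates Rules \<alpha> (A # \<gamma>)"
    "\<delta>2 \<in> candidates Rules [A] \<gamma>"
proof -
  from candidate_split_or_longer[OF assms(1,2)]
  obtain \<delta>1 \<delta>2 where "\<delta> = \<delta>1 @ \<delta>2" "bbisim Rules (\<delta>2 @ \<gamma>) (A # \<gamma>)"
  proof (elim disjE exE conjE bexE)
    fix \<delta>' assume "\<delta>' \<in> candidates Rules (\<alpha> @ [A]) \<gamma>" "length \<delta> < length \<delta>'"
    with assms(3) show thesis by fastforce
  qed
  with assms(2) candidates_append_split show thesis by (metis that)
qed

text \<open>A longest candidate for \<open>\<alpha> @ [A]\<close> splits into candidates for the two parts, and
  lex_less compares the right part first; so the transducer may choose the two parts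
  independently.\<close>

lemma least_longest_candidates_snoc:
  fixes Rules :: "('v::{finite,linorder} \<times> 'a act \<times> 'v list) set"
  assumes N: "normed Rules"
    and d: "least_longest (candidates Rules \<alpha> (A # \<gamma>)) d"
    and c: "least_longest (candidates Rules [A] \<gamma>) c"
  shows "least_longest (candidates Rules (\<alpha> @ [A]) \<gamma>) (d @ c)"
proof -
  let ?S = "candidates Rules (\<alpha> @ [A]) \<gamma>"
  have dc: "d @ c \<in> ?S" using d c unfolding least_longest_def by (blast intro: candidates_append)
  have split_bound: "length \<delta>1 \<le> length d \<and> length \<delta>2 \<le> length c
      \<and> (length \<delta>1 = length d \<longrightarrow> \<delta>1 = d \<or> lex_less d \<delta>1)
      \<and> (length \<delta>2 = length c \<longrightarrow> \<delta>2 = c \<or> lex_less c \<delta>2)"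
    if "\<delta>1 \<in> candidates Rules \<alpha> (A # \<gamma>)" "\<delta>2 \<in> candidates Rules [A] \<gamma>" for \<delta>1 \<delta>2
    using that d c unfolding least_longest_def by blast
  have "?S \<noteq> {}" using dc by blast
  moreover obtain n where "\<forall>\<delta> \<in> ?S. length \<delta> \<le> n" using candidates_length_bounded[OF N] .
  ultimately obtain \<delta>m where \<delta>m: "\<delta>m \<in> ?S" "\<forall>\<delta> \<in> ?S. length \<delta> \<le> length \<delta>m"
    by (rule longest_exists)
  from N \<delta>m obtain \<delta>1 \<delta>2 where "\<delta>m = \<delta>1 @ \<delta>2" "\<delta>1 \<in> candidates Rules \<alpha> (A # \<gamma>)"
    "\<delta>2 \<in> candidates Rules [A] \<gamma>"
    by (rule longest_candidate_split)
  with split_bound have "length \<delta>m \<le> length (d @ c)" by fastforce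
  with \<delta>m(2) have longest: "\<forall>\<delta> \<in> ?S. length \<delta> \<le> length (d @ c)" by (meson order_trans)
  have least: "\<beta> = d @ c \<or> lex_less (d @ c) \<beta>" if "\<beta> \<in> ?S" "length \<beta> = length (d @ c)" for \<beta>
  proof -
    from that(2) longest have "\<forall>\<delta> \<in> ?S. length \<delta> \<le> length \<beta>" by simp
    with N that(1) obtain \<beta>1 \<beta>2 where \<beta>: "\<beta> = \<beta>1 @ \<beta>2"
      "\<beta>1 \<in> candidates Rules \<alpha> (A # \<gamma>)" "\<beta>2 \<in> candidates Rules [A] \<gamma>"
      by (rule longest_candidate_split)
    with split_bound[OF \<beta>(2,3)] that(2) have "length \<beta>1 = length d" "length \<beta>2 = length c"
      by auto
    with split_bound[OF \<beta>(2,3)] show ?thesis unfolding \<beta>(1) by (intro lex_less_append) auto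
  qed
  from dc longest least show ?thesis unfolding least_longest_def by blast
qed

section \<open>The canonical transducer\<close>

lemma canon_run_least_longest:
  fixes Rules :: "('v::{finite,linorder} \<times> 'a act \<times> 'v list) set"
  assumes N: "normed Rules"
  shows "Rset Rules \<gamma> = R \<Longrightarrow>
    least_longest (candidates Rules \<alpha> \<gamma>) (run_rev (canon_delta Rules) R (rev \<alpha>))"
proof (induction \<alpha> arbitrary: R \<gamma> rule: rev_induct)
  case Nil
  then show ?case using candidates_Nil[OF N] unfolding least_longest_def by simp
next
  case (snoc A \<alpha>)
  define \<gamma>0 where "\<gamma>0 = (SOME g. Rset Rules g = R)"
  have \<gamma>0: "Rset Rules \<gamma>0 = R" using someI[of "\<lambda>g. Rset Rules g = R" \<gamma>] snoc.prems \<gamma>0_def by simp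
  have "run_rev (canon_delta Rules) R (rev (\<alpha> @ [A])) =
      run_rev (canon_delta Rules) (Rset Rules (A # \<gamma>0)) (rev \<alpha>) @ canon_out Rules \<gamma>0 A"
    unfolding canon_delta_def \<gamma>0_def Let_def by simp
  moreover have "least_longest (candidates Rules (\<alpha> @ [A]) \<gamma>0)
      (run_rev (canon_delta Rules) (Rset Rules (A # \<gamma>0)) (rev \<alpha>) @ canon_out Rules \<gamma>0 A)"
    using least_longest_candidates_snoc[OF N snoc.IH[OF refl] canon_out_least_longest[OF N]] .
  moreover have "candidates Rules (\<alpha> @ [A]) \<gamma>0 = candidates Rules (\<alpha> @ [A]) \<gamma>"
    using candidates_Rset_cong[OF N] \<gamma>0 snoc.prems by simp
  ultimately show ?case by simp
qed

theorem mainTheorem13: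
  fixes Rules :: "('v::{finite,linorder} \<times> 'a::finite act \<times> 'v list) set"
  assumes "finite Rules"
    and "normed Rules"
    and "R \<in> canon_states Rules"
  shows "bbisim_R Rules R \<alpha> (canon_T Rules R \<alpha>)
    \<and> (bbisim_R Rules R \<alpha> \<beta> \<longleftrightarrow> canon_T Rules R \<alpha> = canon_T Rules R \<beta>)"
proof -
  obtain \<gamma> where \<gamma>: "Rset Rules \<gamma> = R" using assms(3) unfolding canon_states_def by auto
  have reduce: "bbisim_R Rules R x y \<longleftrightarrow> bbisim Rules (x @ \<gamma>) (y @ \<gamma>)" for x y
    using bbisim_R_Rset_iff[OF assms(2)] \<gamma> by blast
  have least: "least_longest (candidates Rules x \<gamma>) (canon_T Rules R x)" for x
    unfolding canon_T_def transducer_output_def using canon_run_least_longest[OF assms(2) \<gamma>] .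
  then have T: "bbisim Rules (canon_T Rules R x @ \<gamma>) (x @ \<gamma>)" for x
    unfolding least_longest_def candidates_def by blast
  have "bbisim_R Rules R \<alpha> (canon_T Rules R \<alpha>)" using T reduce bbisim_sym by blast
  moreover have "canon_T Rules R \<alpha> = canon_T Rules R \<beta>" if "bbisim_R Rules R \<alpha> \<beta>"
  proof -
    from that have "candidates Rules \<alpha> \<gamma> = candidates Rules \<beta> \<gamma>"
      unfolding reduce candidates_def by (blast intro: bbisim_trans bbisim_sym)
    with least[of \<alpha>] least[of \<beta>] show ?thesis by (simp add: least_longest_unique)
  qed
  moreover have "bbisim_R Rules R \<alpha> \<beta>" if "canon_T Rules R \<alpha> = canon_T Rules R \<beta>"
    using T[of \<alpha>] T[of \<beta>] that unfolding reduce by (metis bbisim_sym bbisim_trans)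
  ultimately show ?thesis by blast
qed

end
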